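(* Let $p$ be a prime and let $T\subset\mathbb{Q}_p$ be a non-empty locally finite set. Then $T$ corresponds to a uniform partition of unity if and only if there exists an integer $n$ such that \[\#\big(B(x,p^n)\cap T\big)=\#\big(B(y,p^n)\cap T\big)\quad\text{for all }x,y\in\mathbb{Q}_p.\]
   Context: $\mathbb{Q}_p$ is the field of $p$-adic numbers with Haar measure normalized so that $\mathbb{Z}_p$ has measure $1$; $B(x,p^n)=\{y\in\mathbb{Q}_p:|x-y|_p\le p^n\}$. A set $T$ is locally finite if its intersection with every compact set is finite. $T$ is said to correspond to a uniform partition of unity if there exists a non-negative function $f\in L^1(\mathbb{Q}_p)$ such that $\sum_{t\in T} f(x-t)=1$ for a.e. $x\in\mathbb{Q}_p$. *)

theory Defs
  imports "HOL-Analysis.Analysis" "HOL-Computational_Algebra.Primes"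
begin

text \<open>A p-adic number x is represented by the
  family of its residues c k = (x mod p^k) for all integers k: c k is the unique element of
  Z[1/p] in [0, p^k) with x - c k in p^k Z_p.  Compatibility: c (k+1) - c k in p^k Z, and
  c k = 0 for all sufficiently small k (x bounded).\<close>

definition Qp :: "nat \<Rightarrow> (int \<Rightarrow> rat) set" where
  "Qp p = {c. (\<forall>k. 0 \<le> c k \<and> c k < of_nat p powi k)
             \<and> (\<forall>k. (c (k+1) - c k) / of_nat p powi k \<in> \<int>)
             \<and> (\<exists>K. \<forall>k\<le>K. c k = 0)}"

definition pmod :: "nat \<Rightarrow> int \<Rightarrow> rat \<Rightarrow> rat" where
  "pmod p k r = r - of_nat p powi k * of_int \<lfloor>r / of_nat p powi k\<rfloor>"

definition pzero :: "int \<Rightarrow> rat" where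
  "pzero = (\<lambda>k. 0)"

definition padd :: "nat \<Rightarrow> (int \<Rightarrow> rat) \<Rightarrow> (int \<Rightarrow> rat) \<Rightarrow> (int \<Rightarrow> rat)" where
  "padd p x y = (\<lambda>k. pmod p k (x k + y k))"

definition pneg :: "nat \<Rightarrow> (int \<Rightarrow> rat) \<Rightarrow> (int \<Rightarrow> rat)" where
  "pneg p x = (\<lambda>k. pmod p k (- x k))"

definition psub :: "nat \<Rightarrow> (int \<Rightarrow> rat) \<Rightarrow> (int \<Rightarrow> rat) \<Rightarrow> (int \<Rightarrow> rat)" where
  "psub p x y = padd p x (pneg p y)"

text \<open>p-adic absolute value: |x|_p = p^(-v(x)), v(x) = largest k with x in p^k Z_p.\<close>
definition pabs :: "nat \<Rightarrow> (int \<Rightarrow> rat) \<Rightarrow> real" where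
  "pabs p x = (if x = pzero then 0 else real p powi (- (GREATEST k. x k = 0)))"

definition pdist :: "nat \<Rightarrow> (int \<Rightarrow> rat) \<Rightarrow> (int \<Rightarrow> rat) \<Rightarrow> real" where
  "pdist p x y = pabs p (psub p x y)"

definition pball :: "nat \<Rightarrow> (int \<Rightarrow> rat) \<Rightarrow> int \<Rightarrow> (int \<Rightarrow> rat) set" where
  "pball p x n = {y \<in> Qp p. pdist p x y \<le> real p powi n}"

definition Zp :: "nat \<Rightarrow> (int \<Rightarrow> rat) set" where
  "Zp p = {x \<in> Qp p. pabs p x \<le> 1}"

definition ptop :: "nat \<Rightarrow> (int \<Rightarrow> rat) topology" where
  "ptop p = Metric_space.mtopology (Qp p) (pdist p)"

definition is_haar :: "nat \<Rightarrow> (int \<Rightarrow> rat) measure \<Rightarrow> bool" where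
  "is_haar p M \<longleftrightarrow>
     space M = Qp p
   \<and> sets M = sigma_sets (Qp p) {U. openin (ptop p) U}
   \<and> (\<forall>x\<in>Qp p. \<forall>A\<in>sets M. padd p x ` A \<in> sets M \<and> emeasure M (padd p x ` A) = emeasure M A)
   \<and> (\<forall>K. compactin (ptop p) K \<longrightarrow> emeasure M K < \<infinity>)
   \<and> emeasure M (Zp p) = 1"

definition haar :: "nat \<Rightarrow> (int \<Rightarrow> rat) measure" where
  "haar p = (SOME M. is_haar p M)"

definition locally_finite :: "nat \<Rightarrow> (int \<Rightarrow> rat) set \<Rightarrow> bool" where
  "locally_finite p T \<longleftrightarrow> (\<forall>K. compactin (ptop p) K \<longrightarrow> finite (K \<inter> T))"

definition uniform_partition_of_unity :: "nat \<Rightarrow> (int \<Rightarrow> rat) set \<Rightarrow> bool" where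
  "uniform_partition_of_unity p T \<longleftrightarrow>
     (\<exists>f :: (int \<Rightarrow> rat) \<Rightarrow> real.
        integrable (haar p) f \<and> (\<forall>x\<in>Qp p. 0 \<le> f x)
      \<and> (AE x in haar p. ((\<lambda>t. f (psub p x t)) has_sum 1) T))"

end

theory Submission
  imports Defs
begin

text \<open>
  The ball \<open>B(x, p\<^sup>-\<^sup>L)\<close> is the cylinder of all \<open>y\<close> with the same residue as \<open>x\<close> modulo
  \<open>p\<^sup>L\<close>, and translating it by any of its own points leaves it unchanged.

  If every ball of radius \<open>p\<^sup>n\<close> meets \<open>T\<close> in \<open>c\<close> points, the normalised indicator
  \<open>f = 1\<^bsub>B(0,p\<^sup>n)\<^esub> / c\<close> is a partition of unity: \<open>\<Sum>\<^sub>t f(x - t) = #(B(x,p\<^sup>n) \<inter> T) / c = 1\<close>.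

  Conversely, integrating \<open>\<Sum>\<^sub>t f(y - t) = 1\<close> over a ball \<open>B = B(x, p\<^sup>-\<^sup>L)\<close> and using
  Fubini and translation invariance gives \<open>\<mu>(B) = \<integral> f(z) #(B(x - z, p\<^sup>-\<^sup>L) \<inter> T) dz\<close>,
  whose left side does not depend on \<open>x\<close>.  Choose \<open>L\<close> so large that \<open>B(0, p\<^sup>-\<^sup>L)\<close> carries
  more than half of \<open>\<integral> f\<close>; for \<open>z\<close> in this ball the count at \<open>x - z\<close> is the count at
  \<open>x\<close>.  Comparing the identity at a centre of maximal and at one of minimal count forces
  all counts to agree.

  As \<open>haar\<close> is defined by choice, a Haar measure has to be constructed: it is the
  Caratheodory extension of the content \<open>p\<^sup>-\<^sup>m\<close> of the cylinders of level \<open>m\<close>, which is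
  countably additive because cylinders are compact and open.  Primality of \<open>p\<close> is only used
  through \<open>p \<ge> 2\<close>.
\<close>

lemma int_Greatest_bounded:
  fixes P :: "int \<Rightarrow> bool"
  assumes "P a" "\<And>k. P k \<Longrightarrow> k \<le> b"
  shows "P (GREATEST k. P k)" "\<And>k. P k \<Longrightarrow> k \<le> (GREATEST k. P k)"
proof -
  let ?S = "{k. P k \<and> a \<le> k}"
  have fin: "finite ?S" by (rule finite_subset[of _ "{a..b}"]) (use assms in auto)
  have ne: "a \<in> ?S" using assms by auto
  define m where "m = Max ?S"
  have mS: "m \<in> ?S" unfolding m_def using fin ne Max_in by blast
  have ub: "\<And>k. P k \<Longrightarrow> k \<le> m"
  proof -
    fix k assume "P k"
    show "k \<le> m"
    proof (cases "a \<le> k")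
      case True then show ?thesis using \<open>P k\<close> fin unfolding m_def by (auto intro: Max_ge)
    next
      case False then show ?thesis using mS by auto
    qed
  qed
  have G: "(GREATEST k. P k) = m" by (rule Greatest_equality) (use mS ub in auto)
  show "P (GREATEST k. P k)" using G mS by simp
  show "\<And>k. P k \<Longrightarrow> k \<le> (GREATEST k. P k)" using G ub by simp
qed

lemma power_int_strict_increasing_iff: assumes "(a::real) > 1" shows "a powi k < a powi l \<longleftrightarrow> k < l"
proof
  assume "k < l" then show "a powi k < a powi l" using assms by (rule power_int_strict_increasing)
next
  assume h: "a powi k < a powi l"
  show "k < l"
  proof (rule ccontr)
    assume "\<not> k < l"
    then have "a powi l \<le> a powi k" using assms by (intro power_int_increasing) auto
    then show False using h by simp
  qed
qed

lemma power_int_increasing_iff: assumes "(a::real) > 1" shows "a powi k \<le> a powi l \<longleftrightarrow> k \<le> l"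
  using power_int_strict_increasing_iff[OF assms, of l k] by linarith

lemma nn_integral_count_space_has_sum:
  fixes h :: "'a \<Rightarrow> real"
  assumes cA: "countable A" and nn: "\<And>x. x \<in> A \<Longrightarrow> 0 \<le> h x" and hs: "(h has_sum s) A"
  shows "(\<integral>\<^sup>+x. ennreal (h x) \<partial>count_space A) = ennreal s"
proof (cases "finite A")
  case True
  have "s = (\<Sum>x\<in>A. h x)" using hs has_sum_finite_iff[OF True] by blast
  then show ?thesis using nn True by (simp add: nn_integral_count_space_finite)
next
  case False
  define e where "e = from_nat_into A"
  have bij: "bij_betw e UNIV A" unfolding e_def by (rule bij_betw_from_nat_into[OF cA False])
  have "(\<integral>\<^sup>+x. ennreal (h x) \<partial>count_space A) = (\<integral>\<^sup>+n. ennreal (h (e n)) \<partial>count_space UNIV)"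
    by (rule nn_integral_bij_count_space[OF bij, symmetric])
  also have "\<dots> = (\<Sum>n. ennreal (h (e n)))" by (rule nn_integral_count_space_nat)
  also have "((h \<circ> e) has_sum s) UNIV"
    using hs has_sum_reindex[of e UNIV h s] bij unfolding bij_betw_def by simp
  then have sm: "(h \<circ> e) sums s" by (rule has_sum_imp_sums)
  have "(\<Sum>n. ennreal (h (e n))) = ennreal (\<Sum>n. h (e n))"
    using sm nn bij unfolding bij_betw_def sums_iff by (intro suminf_ennreal2) (auto simp: comp_def)
  also have "(\<Sum>n. h (e n)) = s" using sm unfolding sums_iff comp_def by simp
  finally show ?thesis .
qed

lemma nn_integral_indicator_split:
  fixes g :: "'a \<Rightarrow> ennreal"
  assumes g: "g \<in> borel_measurable M" and B: "B \<in> sets M"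
  shows "(\<integral>\<^sup>+ z. g z * (indicator B z * u + indicator (space M - B) z * v) \<partial>M)
       = u * (\<integral>\<^sup>+ z. g z * indicator B z \<partial>M) + v * (\<integral>\<^sup>+ z. g z * indicator (space M - B) z \<partial>M)"
proof -
  have "(\<integral>\<^sup>+ z. g z * (indicator B z * u + indicator (space M - B) z * v) \<partial>M)
      = (\<integral>\<^sup>+ z. g z * indicator B z * u \<partial>M) + (\<integral>\<^sup>+ z. g z * indicator (space M - B) z * v \<partial>M)"
    using g B by (subst nn_integral_add[symmetric]) (auto simp: algebra_simps)
  also have "\<dots> = u * (\<integral>\<^sup>+ z. g z * indicator B z \<partial>M) + v * (\<integral>\<^sup>+ z. g z * indicator (space M - B) z \<partial>M)"
    using g B by (simp add: nn_integral_multc) (simp add: mult.commute)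
  finally show ?thesis .
qed

lemma nn_integral_ne_0_if_weighted_ne_0:
  fixes g h :: "'a \<Rightarrow> ennreal"
  assumes g: "g \<in> borel_measurable M" and "(\<integral>\<^sup>+ z. g z * h z \<partial>M) \<noteq> 0"
  shows "(\<integral>\<^sup>+ z. g z \<partial>M) \<noteq> 0"
proof
  assume "(\<integral>\<^sup>+ z. g z \<partial>M) = 0"
  then have "AE z in M. g z = 0" using g by (subst (asm) nn_integral_0_iff_AE) auto
  then have "(\<integral>\<^sup>+ z. g z * h z \<partial>M) = (\<integral>\<^sup>+ z. 0 \<partial>M)" by (intro nn_integral_cong_AE) auto
  then show False using assms(2) by simp
qed

lemma nn_integral_concentrates_on_incseq:
  fixes g :: "'a \<Rightarrow> ennreal"
  assumes inc: "incseq B" and B: "range B \<subseteq> sets M" and cover: "(\<Union>k. B k) = space M"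
    and g: "g \<in> borel_measurable M"
    and fin: "(\<integral>\<^sup>+ z. g z \<partial>M) < \<infinity>" and nz: "(\<integral>\<^sup>+ z. g z \<partial>M) \<noteq> 0"
  shows "\<exists>k. (\<integral>\<^sup>+ z. g z * indicator (space M - B k) z \<partial>M) < (\<integral>\<^sup>+ z. g z * indicator (B k) z \<partial>M)"
proof -
  define I where "I = (\<integral>\<^sup>+ z. g z \<partial>M)"
  define a where "a k = (\<integral>\<^sup>+ z. g z * indicator (B k) z \<partial>M)" for k
  define b where "b k = (\<integral>\<^sup>+ z. g z * indicator (space M - B k) z \<partial>M)" for k
  have Bk: "B k \<in> sets M" for k using B by blast
  have I_split: "I = a k + b k" for k
  proof -
    have "I = (\<integral>\<^sup>+ z. g z * (indicator (B k) z * 1 + indicator (space M - B k) z * 1) \<partial>M)"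
      unfolding I_def by (rule nn_integral_cong) (auto simp: indicator_def)
    also have "\<dots> = a k + b k"
      unfolding a_def b_def nn_integral_indicator_split[OF g Bk] by simp
    finally show ?thesis .
  qed
  have "(SUP k. a k) = (\<integral>\<^sup>+ z. (SUP k. g z * indicator (B k) z) \<partial>M)"
    unfolding a_def using inc g Bk
    by (intro nn_integral_monotone_convergence_SUP[symmetric])
       (auto simp: incseq_def le_fun_def indicator_def subset_eq intro!: mult_left_mono)
  also have "\<dots> = I"
    unfolding I_def
  proof (rule nn_integral_cong)
    fix z assume "z \<in> space M"
    then obtain k where "z \<in> B k" using cover by blast
    then show "(SUP k. g z * indicator (B k) z) = g z"
      by (intro antisym SUP_least SUP_upper2[of k]) (auto simp: indicator_def)
  qed
  finally have SUP_a: "(SUP k. a k) = I" .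
  obtain Ir where Ir: "I = ennreal Ir" "Ir > 0"
    using fin nz unfolding I_def by (cases "I") (auto simp: I_def ennreal_zero_less_top)
  have "ennreal (Ir / 2) < (SUP k. a k)" unfolding SUP_a Ir(1) using Ir(2) by (intro ennreal_lessI) auto
  then obtain k where k: "ennreal (Ir / 2) < a k" by (auto simp: less_SUP_iff)
  obtain ar br where ab: "a k = ennreal ar" "b k = ennreal br" "ar \<ge> 0" "br \<ge> 0"
    using I_split[of k] Ir by (cases "a k"; cases "b k") auto
  have "Ir = ar + br" using I_split[of k] Ir ab by (simp flip: ennreal_plus)
  moreover have "Ir / 2 < ar" using k ab Ir(2) by (simp add: ennreal_less_iff)
  ultimately show ?thesis using ab by (intro exI[of _ k]) (simp add: b_def a_def ennreal_less_iff)
qed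

lemma finite_image_if_scaled_bounded:
  fixes c :: "'a \<Rightarrow> nat"
  assumes bnd: "\<And>w. w \<in> A \<Longrightarrow> real (c w) * a \<le> V" and a: "0 < a"
  shows "finite (c ` A)"
proof (rule finite_subset[of _ "{..nat \<lceil>V / a\<rceil>}"])
  have "real (c w) \<le> V / a" if "w \<in> A" for w using bnd[OF that] a by (simp add: pos_le_divide_eq)
  then have "real (c w) \<le> real (nat \<lceil>V / a\<rceil>)" if "w \<in> A" for w
    using that order.trans real_nat_ceiling_ge by blast
  then show "c ` A \<subseteq> {..nat \<lceil>V / a\<rceil>}" using of_nat_le_iff by blast
qed simp

lemma nn_integral_shifted_count_between:
  fixes g :: "'a \<Rightarrow> ennreal" and c :: "'a \<Rightarrow> nat"
  assumes B: "B \<in> sets M"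
    and shift: "\<And>x z. x \<in> space M \<Longrightarrow> z \<in> space M \<Longrightarrow> s x z \<in> space M"
    and local: "\<And>x z. x \<in> space M \<Longrightarrow> z \<in> B \<Longrightarrow> c (s x z) = c x"
    and w: "w \<in> space M"
  shows "(\<And>w'. w' \<in> space M \<Longrightarrow> v \<le> c w') \<Longrightarrow>
           (\<integral>\<^sup>+ z. g z * (indicator B z * of_nat (c w) + indicator (space M - B) z * of_nat v) \<partial>M)
           \<le> (\<integral>\<^sup>+ z. g z * of_nat (c (s w z)) \<partial>M)"
    and "(\<And>w'. w' \<in> space M \<Longrightarrow> c w' \<le> v) \<Longrightarrow>
           (\<integral>\<^sup>+ z. g z * of_nat (c (s w z)) \<partial>M)
           \<le> (\<integral>\<^sup>+ z. g z * (indicator B z * of_nat (c w) + indicator (space M - B) z * of_nat v) \<partial>M)"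
  using local[OF w] shift[OF w] sets.sets_into_space[OF B]
  by (auto intro!: nn_integral_mono mult_left_mono simp: indicator_def)

text \<open>Let \<open>u\<close> and \<open>v\<close> be the largest and the smallest count, and \<open>a > b\<close> the weights of \<open>B\<close> and of
  its complement.  The common average is at least \<open>u a + v b\<close> (at a point of count \<open>u\<close>) and at
  most \<open>v a + u b\<close> (at a point of count \<open>v\<close>), whence \<open>(u - v)(a - b) \<le> 0\<close>.\<close>
lemma constant_if_shifted_averages_agree:
  fixes g :: "'a \<Rightarrow> ennreal" and c :: "'a \<Rightarrow> nat"
  assumes g: "g \<in> borel_measurable M" and B: "B \<in> sets M"
    and heavy: "(\<integral>\<^sup>+ z. g z * indicator (space M - B) z \<partial>M) < (\<integral>\<^sup>+ z. g z * indicator B z \<partial>M)"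
    and fin: "(\<integral>\<^sup>+ z. g z \<partial>M) < \<infinity>"
    and shift: "\<And>x z. x \<in> space M \<Longrightarrow> z \<in> space M \<Longrightarrow> s x z \<in> space M"
    and local: "\<And>x z. x \<in> space M \<Longrightarrow> z \<in> B \<Longrightarrow> c (s x z) = c x"
    and avg: "\<And>x. x \<in> space M \<Longrightarrow> (\<integral>\<^sup>+ z. g z * of_nat (c (s x z)) \<partial>M) = V"
    and V: "V < \<infinity>"
    and x: "x \<in> space M" and y: "y \<in> space M"
  shows "c x = c y"
proof -
  define a where "a = (\<integral>\<^sup>+ z. g z * indicator B z \<partial>M)"
  define b where "b = (\<integral>\<^sup>+ z. g z * indicator (space M - B) z \<partial>M)"
  have "a \<le> (\<integral>\<^sup>+ z. g z \<partial>M)" "b \<le> (\<integral>\<^sup>+ z. g z \<partial>M)"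
    unfolding a_def b_def by (auto intro!: nn_integral_mono simp: indicator_def)
  then obtain ar br Vr where ar: "a = ennreal ar" "ar \<ge> 0" and br: "b = ennreal br" "br \<ge> 0"
    and Vr: "V = ennreal Vr" "Vr \<ge> 0"
    using fin V by (cases a; cases b; cases V) auto
  have ab: "br < ar" using heavy ar br unfolding a_def[symmetric] b_def[symmetric]
    by (simp add: ennreal_less_iff)
  have split: "(\<integral>\<^sup>+ z. g z * (indicator B z * of_nat u + indicator (space M - B) z * of_nat v) \<partial>M)
      = ennreal (real u * ar + real v * br)" for u v :: nat
    unfolding nn_integral_indicator_split[OF g B] a_def[symmetric] b_def[symmetric] ar br
    using ar(2) br(2) by (simp add: ennreal_of_nat_eq_real_of_nat flip: ennreal_mult ennreal_plus)
  have lower: "ennreal (real (c w) * ar + real v * br) \<le> V"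
    if w: "w \<in> space M" and lo: "\<And>w'. w' \<in> space M \<Longrightarrow> v \<le> c w'" for w v
    using nn_integral_shifted_count_between(1)[of B M s c w v g] B shift local w lo split avg[OF w] by simp
  have upper: "V \<le> ennreal (real (c w) * ar + real v * br)"
    if w: "w \<in> space M" and hi: "\<And>w'. w' \<in> space M \<Longrightarrow> c w' \<le> v" for w v
    using nn_integral_shifted_count_between(2)[of B M s c w v g] B shift local w hi split avg[OF w] by simp
  have "real (c w) * ar \<le> Vr" if "w \<in> space M" for w
    using lower[OF that, of 0] Vr by simp
  then have finC: "finite (c ` space M)" using ab br(2) by (intro finite_image_if_scaled_bounded) auto
  have neC: "c ` space M \<noteq> {}" using x by blast
  obtain x1 where x1: "x1 \<in> space M" "c x1 = Max (c ` space M)" using Max_in[OF finC neC] by auto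
  obtain x2 where x2: "x2 \<in> space M" "c x2 = Min (c ` space M)" using Min_in[OF finC neC] by auto
  have bounds: "c x2 \<le> c w" "c w \<le> c x1" if "w \<in> space M" for w
    using that finC x1 x2 by auto
  have "ennreal (real (c x1) * ar + real (c x2) * br) \<le> ennreal (real (c x2) * ar + real (c x1) * br)"
    using lower[OF x1(1) bounds(1)] upper[OF x2(1) bounds(2)] by (rule order.trans)
  then have "real (c x1) * ar + real (c x2) * br \<le> real (c x2) * ar + real (c x1) * br"
    using ar(2) br(2) by (subst (asm) ennreal_le_iff) auto
  then have "(real (c x1) - real (c x2)) * (ar - br) \<le> 0"
    by (simp add: algebra_simps)
  then have "c x1 \<le> c x2" using ab by (simp add: mult_le_0_iff)
  then show ?thesis using bounds[OF x] bounds[OF y] by linarith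
qed

section \<open>Congruences modulo powers of \<open>p\<close>\<close>

abbreviation ppow :: "nat \<Rightarrow> int \<Rightarrow> rat" where "ppow p k \<equiv> of_nat p powi k"

definition pcong :: "nat \<Rightarrow> int \<Rightarrow> rat \<Rightarrow> rat \<Rightarrow> bool" where
  "pcong p k a b \<longleftrightarrow> (a - b) / ppow p k \<in> \<int>"

lemma ppow_pos: "p \<ge> 2 \<Longrightarrow> ppow p k > 0" by auto

lemma ppow_add: "p \<ge> 2 \<Longrightarrow> ppow p (a + b) = ppow p a * ppow p b"
  by (simp add: power_int_add)

lemma ppow_split: "p \<ge> 2 \<Longrightarrow> m \<le> m' \<Longrightarrow> ppow p m' = ppow p m * of_nat (p ^ nat (m' - m))"
  using ppow_add[of p m "m' - m"] by (simp add: power_int_def)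

lemma pcong_refl[simp]: "pcong p k a a" by (simp add: pcong_def)

lemma pcong_sym: "pcong p k a b \<Longrightarrow> pcong p k b a"
proof -
  assume "pcong p k a b"
  then have "- ((a - b) / ppow p k) \<in> \<int>" unfolding pcong_def by (rule Ints_minus)
  moreover have "- ((a - b) / ppow p k) = (b - a) / ppow p k" by (metis minus_diff_eq minus_divide_left)
  ultimately show ?thesis unfolding pcong_def by metis
qed

lemma pcong_trans: "pcong p k a b \<Longrightarrow> pcong p k b c \<Longrightarrow> pcong p k a c"
proof -
  assume "pcong p k a b" "pcong p k b c"
  then have "(a - b) / ppow p k + (b - c) / ppow p k \<in> \<int>" unfolding pcong_def by (rule Ints_add)
  then show ?thesis unfolding pcong_def by (simp add: add_divide_distrib[symmetric])
qed

lemma pcong_add: "pcong p k a b \<Longrightarrow> pcong p k c d \<Longrightarrow> pcong p k (a + c) (b + d)"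
proof -
  assume "pcong p k a b" "pcong p k c d"
  then have "(a - b) / ppow p k + (c - d) / ppow p k \<in> \<int>" unfolding pcong_def by (rule Ints_add)
  then show ?thesis unfolding pcong_def by (simp add: add_divide_distrib[symmetric] algebra_simps)
qed

lemma pcong_minus: "pcong p k a b \<Longrightarrow> pcong p k (- a) (- b)"
proof -
  assume "pcong p k a b"
  then have "- ((a - b) / ppow p k) \<in> \<int>" unfolding pcong_def by (rule Ints_minus)
  moreover have "- ((a - b) / ppow p k) = (- a - - b) / ppow p k" by (simp add: minus_divide_left)
  ultimately show ?thesis unfolding pcong_def by metis
qed

lemma pcong_add_multiple: "pcong p k (a + of_int j * ppow p k) a"
  unfolding pcong_def
  by (cases "ppow p k = 0") auto

lemma pcong_add_left_iff: "pcong p k (a + b) c \<longleftrightarrow> pcong p k b (c - a)"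
  unfolding pcong_def by (simp add: algebra_simps)

lemma pcong_mono: assumes "p \<ge> 2" "j \<le> k" "pcong p k a b" shows "pcong p j a b"
proof -
  have "ppow p k = ppow p j * ppow p (k - j)" using assms ppow_add[of p j "k-j"] by simp
  moreover have "ppow p (k - j) \<in> \<int>" using assms(2)
    by (simp add: power_int_def)
  ultimately have "(a - b) / ppow p j = ((a - b) / ppow p k) * ppow p (k - j)"
    using ppow_pos[OF assms(1), of j] ppow_pos[OF assms(1), of "k-j"] assms(1) by simp
  then show ?thesis using assms(3) \<open>ppow p (k - j) \<in> \<int>\<close> unfolding pcong_def
    by (metis Ints_mult)
qed

lemma pmod_bounds: assumes "p \<ge> 2" shows "0 \<le> pmod p k r" "pmod p k r < ppow p k"
proof -
  have P: "ppow p k > 0" using ppow_pos[OF assms] .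
  have "of_int \<lfloor>r / ppow p k\<rfloor> \<le> r / ppow p k" by (rule of_int_floor_le)
  then have "ppow p k * of_int \<lfloor>r / ppow p k\<rfloor> \<le> r" using P by (simp add: le_divide_eq mult.commute)
  then show "0 \<le> pmod p k r" unfolding pmod_def by simp
  then have "r / ppow p k < (of_int \<lfloor>r / ppow p k\<rfloor> + 1)" by (simp add: floor_le_iff[symmetric])
  then have "r < (of_int \<lfloor>r / ppow p k\<rfloor> + 1) * ppow p k" using P by (simp add: divide_less_eq)
  then have "r < ppow p k * of_int \<lfloor>r / ppow p k\<rfloor> + ppow p k" by (simp add: algebra_simps)
  then show "pmod p k r < ppow p k" unfolding pmod_def by simp
qed

lemma pmod_pcong: assumes "p \<ge> 2" shows "pcong p k (pmod p k r) r"
  using ppow_pos[OF assms, of k] unfolding pcong_def pmod_def by simp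

lemma pcong_residue_unique: assumes "p \<ge> 2" "pcong p k a b" "0 \<le> a" "a < ppow p k" "0 \<le> b" "b < ppow p k"
  shows "a = b"
proof -
  obtain z where z: "(a - b) / ppow p k = of_int z" using assms(2) unfolding pcong_def by (auto elim: Ints_cases)
  have P: "ppow p k > 0" using ppow_pos[OF assms(1)] .
  have "a - b = of_int z * ppow p k" using z P assms(1) by (simp add: divide_eq_eq)
  moreover have "a - b < ppow p k" "a - b > - ppow p k" using assms by auto
  ultimately have "of_int z * ppow p k < 1 * ppow p k" "(-1) * ppow p k < of_int z * ppow p k" by auto
  then have "of_int z < (1::rat)" "(-1::rat) < of_int z" using P mult_less_cancel_right_pos by blast+
  then have "z = 0" by linarith
  then show ?thesis using \<open>a - b = of_int z * ppow p k\<close> by simp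
qed

lemma pmod_eq_iff: assumes "p \<ge> 2" shows "pmod p k a = pmod p k b \<longleftrightarrow> pcong p k a b"
proof
  assume "pmod p k a = pmod p k b"
  then show "pcong p k a b" using pmod_pcong[OF assms, of k a] pmod_pcong[OF assms, of k b]
    by (metis pcong_sym pcong_trans)
next
  assume "pcong p k a b"
  then have "pcong p k (pmod p k a) (pmod p k b)" using pmod_pcong[OF assms, of k a] pmod_pcong[OF assms, of k b]
    by (metis pcong_sym pcong_trans)
  then show "pmod p k a = pmod p k b" using pmod_bounds[OF assms] pcong_residue_unique[OF assms] by blast
qed

lemma pmod_eq_self: assumes "p \<ge> 2" "0 \<le> r" "r < ppow p k" shows "pmod p k r = r"
  using pcong_residue_unique[OF assms(1) pmod_pcong[OF assms(1)]] pmod_bounds[OF assms(1)] assms by blast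

lemma pmod_eq_iff_pcong: assumes "p \<ge> 2" "0 \<le> b" "b < ppow p k" shows "pmod p k a = b \<longleftrightarrow> pcong p k a b"
  using pmod_eq_iff[OF assms(1), of k a b] pmod_eq_self[OF assms] by simp

section \<open>\<open>p\<close>-adic numbers as residue sequences\<close>

lemma QpD:
  assumes "y \<in> Qp p"
  shows "0 \<le> y k" "y k < ppow p k" "pcong p k (y (k+1)) (y k)" "\<exists>K. \<forall>k\<le>K. y k = 0"
  using assms unfolding Qp_def pcong_def by auto

lemma QpI:
  assumes "\<And>k. 0 \<le> y k" "\<And>k. y k < ppow p k" "\<And>k. pcong p k (y (k+1)) (y k)" "\<exists>K. \<forall>k\<le>K. y k = 0"
  shows "y \<in> Qp p"
  using assms unfolding Qp_def pcong_def by auto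

lemma Qp_pcong_residues:
  assumes "p \<ge> 2" "y \<in> Qp p" "j \<le> k"
  shows "pcong p j (y k) (y j)"
  using assms(3)
proof (induction k rule: int_ge_induct)
  case base then show ?case by simp
next
  case (step k)
  have "pcong p j (y (k+1)) (y k)"
    using pcong_mono[OF assms(1) step(1) QpD(3)[OF assms(2)]] .
  then show ?case using step(2) pcong_trans by blast
qed

lemma Qp_residue_eq_pmod:
  assumes "p \<ge> 2" "y \<in> Qp p" "j \<le> k"
  shows "y j = pmod p j (y k)"
proof -
  have "pmod p j (y k) = y j" using pmod_eq_iff_pcong[OF assms(1) QpD(1,2)[OF assms(2)]] Qp_pcong_residues[OF assms] by blast
  then show ?thesis by simp
qed

lemma Qp_residues_agree_down:
  assumes "p \<ge> 2" "y \<in> Qp p" "z \<in> Qp p" "j \<le> k" "y k = z k"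
  shows "y j = z j"
  using Qp_residue_eq_pmod[OF assms(1,2,4)] Qp_residue_eq_pmod[OF assms(1,3,4)] assms(5) by simp

lemma pzero_in_Qp: "p \<ge> 2 \<Longrightarrow> pzero \<in> Qp p"
  by (rule QpI) (auto simp: pzero_def)

lemma pmod_family_in_Qp:
  assumes "p \<ge> 2" "\<And>k. pcong p k (s (k+1)) (s k)" "\<exists>K. \<forall>k\<le>K. s k = 0"
  shows "(\<lambda>k. pmod p k (s k)) \<in> Qp p"
proof (rule QpI)
  fix k
  show "0 \<le> pmod p k (s k)" "pmod p k (s k) < ppow p k" using pmod_bounds[OF assms(1)] by auto
  have "pcong p k (pmod p (k+1) (s (k+1))) (s (k+1))"
    using pcong_mono[OF assms(1) _ pmod_pcong[OF assms(1)]] by simp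
  then show "pcong p k (pmod p (k + 1) (s (k + 1))) (pmod p k (s k))"
    using assms(2) pmod_pcong[OF assms(1), of k "s k"] by (meson pcong_sym pcong_trans)
next
  obtain K where "\<forall>k\<le>K. s k = 0" using assms(3) by blast
  then show "\<exists>K. \<forall>k\<le>K. pmod p k (s k) = 0" by (intro exI[of _ K]) (simp add: pmod_def)
qed

lemma padd_in_Qp:
  assumes "p \<ge> 2" "x \<in> Qp p" "y \<in> Qp p"
  shows "padd p x y \<in> Qp p"
  unfolding padd_def
proof (rule pmod_family_in_Qp[OF assms(1)])
  show "\<And>k. pcong p k (x (k + 1) + y (k + 1)) (x k + y k)"
    using QpD(3) assms pcong_add by blast
  obtain K1 K2 where "\<forall>k\<le>K1. x k = 0" "\<forall>k\<le>K2. y k = 0" using QpD(4) assms by metis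
  then show "\<exists>K. \<forall>k\<le>K. x k + y k = 0" by (intro exI[of _ "min K1 K2"]) auto
qed

lemma pneg_in_Qp:
  assumes "p \<ge> 2" "x \<in> Qp p"
  shows "pneg p x \<in> Qp p"
  unfolding pneg_def
proof (rule pmod_family_in_Qp[OF assms(1)])
  show "\<And>k. pcong p k (- x (k + 1)) (- x k)"
    using QpD(3) assms pcong_minus by blast
  obtain K1 where "\<forall>k\<le>K1. x k = 0" using QpD(4) assms by metis
  then show "\<exists>K. \<forall>k\<le>K. - x k = 0" by (intro exI[of _ K1]) auto
qed

lemma psub_in_Qp: "p \<ge> 2 \<Longrightarrow> x \<in> Qp p \<Longrightarrow> y \<in> Qp p \<Longrightarrow> psub p x y \<in> Qp p"
  unfolding psub_def using padd_in_Qp pneg_in_Qp by blast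

lemma Qp_eqI:
  assumes "p \<ge> 2" "x \<in> Qp p" "y \<in> Qp p" "\<And>k. pcong p k (x k) (y k)"
  shows "x = y"
proof
  fix k show "x k = y k" using pcong_residue_unique[OF assms(1) assms(4)] QpD[OF assms(2)] QpD[OF assms(3)] by blast
qed

lemma psub_pcong: assumes "p \<ge> 2" shows "pcong p k (psub p x y k) (x k - y k)"
proof -
  have 1: "pcong p k (psub p x y k) (x k + pmod p k (- y k))"
    unfolding psub_def padd_def pneg_def by (rule pmod_pcong[OF assms])
  have 2: "pcong p k (x k + pmod p k (- y k)) (x k + - y k)"
    by (rule pcong_add[OF pcong_refl pmod_pcong[OF assms]])
  show ?thesis using pcong_trans[OF 1 2] by simp
qed

lemma padd_pcong: "p \<ge> 2 \<Longrightarrow> pcong p k (padd p x y k) (x k + y k)"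
  unfolding padd_def using pmod_pcong by blast

lemma pneg_pcong: "p \<ge> 2 \<Longrightarrow> pcong p k (pneg p x k) (- x k)"
  unfolding pneg_def using pmod_pcong by blast

lemma padd_comm: "padd p x y = padd p y x"
  unfolding padd_def by (simp add: add.commute)

lemma padd_pneg_cancel:
  assumes p: "p \<ge> 2" and x: "x \<in> Qp p" and y: "y \<in> Qp p"
  shows "padd p x (padd p (pneg p x) y) = y" "padd p (pneg p x) (padd p x y) = y"
proof -
  have Q1: "padd p x (padd p (pneg p x) y) \<in> Qp p" using padd_in_Qp[OF p x padd_in_Qp[OF p pneg_in_Qp[OF p x] y]] .
  have Q2: "padd p (pneg p x) (padd p x y) \<in> Qp p" using padd_in_Qp[OF p pneg_in_Qp[OF p x] padd_in_Qp[OF p x y]] .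
  show "padd p x (padd p (pneg p x) y) = y"
  proof (rule Qp_eqI[OF p Q1 y])
    fix k
    have "pcong p k (padd p x (padd p (pneg p x) y) k) (x k + padd p (pneg p x) y k)" by (rule padd_pcong[OF p])
    moreover have "pcong p k (x k + padd p (pneg p x) y k) (x k + (pneg p x k + y k))"
      by (rule pcong_add[OF pcong_refl padd_pcong[OF p]])
    moreover have "pcong p k (x k + (pneg p x k + y k)) (x k + (- x k + y k))"
      by (rule pcong_add[OF pcong_refl pcong_add[OF pneg_pcong[OF p] pcong_refl]])
    ultimately show "pcong p k (padd p x (padd p (pneg p x) y) k) (y k)" using pcong_trans by fastforce
  qed
  show "padd p (pneg p x) (padd p x y) = y"
  proof (rule Qp_eqI[OF p Q2 y])
    fix k
    have "pcong p k (padd p (pneg p x) (padd p x y) k) (pneg p x k + padd p x y k)" by (rule padd_pcong[OF p])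
    moreover have "pcong p k (pneg p x k + padd p x y k) (- x k + (x k + y k))"
      by (rule pcong_add[OF pneg_pcong[OF p] padd_pcong[OF p]])
    ultimately show "pcong p k (padd p (pneg p x) (padd p x y) k) (y k)" using pcong_trans by fastforce
  qed
qed

lemma psub_padd_cancel: assumes p: "p \<ge> 2" and z: "z \<in> Qp p" and t: "t \<in> Qp p"
  shows "psub p (padd p t z) t = z"
  unfolding psub_def using padd_comm[of p "padd p t z" "pneg p t"] padd_pneg_cancel(2)[OF p t z] by simp

lemma psub_eq_padd: "psub p y t = padd p (pneg p t) y"
  unfolding psub_def by (rule padd_comm)

lemma psub_eq_0_iff_pcong:
  assumes "p \<ge> 2"
  shows "psub p x y k = 0 \<longleftrightarrow> pcong p k (x k) (y k)"
proof -
  have r: "0 \<le> psub p x y k" "psub p x y k < ppow p k"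
    unfolding psub_def padd_def using pmod_bounds[OF assms] by auto
  have "psub p x y k = 0 \<longleftrightarrow> pcong p k (psub p x y k) 0"
  proof
    assume "pcong p k (psub p x y k) 0"
    then show "psub p x y k = 0" using pcong_residue_unique[OF assms, of k "psub p x y k" 0] r ppow_pos[OF assms, of k] by simp
  qed simp
  also have "\<dots> \<longleftrightarrow> pcong p k (x k - y k) 0" using psub_pcong[OF assms] by (meson pcong_sym pcong_trans)
  also have "\<dots> \<longleftrightarrow> pcong p k (x k) (y k)" by (simp add: pcong_def)
  finally show ?thesis .
qed

lemma psub_eq_0_iff:
  assumes "p \<ge> 2" "x \<in> Qp p" "y \<in> Qp p"
  shows "psub p x y k = 0 \<longleftrightarrow> x k = y k"
proof -
  have "psub p x y k = 0 \<longleftrightarrow> pcong p k (x k) (y k)" by (rule psub_eq_0_iff_pcong[OF assms(1)])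
  also have "\<dots> \<longleftrightarrow> x k = y k" using pcong_residue_unique[OF assms(1)] QpD[OF assms(2)] QpD[OF assms(3)] by auto
  finally show ?thesis .
qed

text \<open>\<open>in_Zinv p r\<close> says \<open>r \<in> \<int>[1/p]\<close>.\<close>
definition in_Zinv :: "nat \<Rightarrow> rat \<Rightarrow> bool" where
  "in_Zinv p r \<longleftrightarrow> (\<exists>K. pcong p K r 0)"

definition Qp_of_rat :: "nat \<Rightarrow> rat \<Rightarrow> (int \<Rightarrow> rat)" where
  "Qp_of_rat p r = (\<lambda>k. pmod p k r)"

lemma Qp_residue_in_Zinv: assumes "p \<ge> 2" "y \<in> Qp p" shows "in_Zinv p (y k)"
proof -
  obtain K where K: "\<forall>k\<le>K. y k = 0" using QpD(4)[OF assms(2)] by blast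
  show ?thesis
  proof (cases "k \<le> K")
    case True then show ?thesis using K unfolding in_Zinv_def by (intro exI[of _ K]) simp
  next
    case False
    then have "pcong p K (y k) (y K)" using Qp_pcong_residues[OF assms, of K k] by simp
    then show ?thesis using K unfolding in_Zinv_def by (intro exI[of _ K]) simp
  qed
qed

lemma ppow_in_Zinv: "p \<ge> 2 \<Longrightarrow> in_Zinv p (ppow p m)"
  unfolding in_Zinv_def pcong_def by (intro exI[of _ m]) simp

lemma in_Zinv_add: assumes "p \<ge> 2" "in_Zinv p a" "in_Zinv p b" shows "in_Zinv p (a + b)"
proof -
  obtain K1 K2 where "pcong p K1 a 0" "pcong p K2 b 0" using assms unfolding in_Zinv_def by blast
  then have "pcong p (min K1 K2) a 0" "pcong p (min K1 K2) b 0" using pcong_mono[OF assms(1)] by (meson min.cobounded1 min.cobounded2)+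
  then have "pcong p (min K1 K2) (a + b) (0 + 0)" by (rule pcong_add)
  then show ?thesis unfolding in_Zinv_def by auto
qed

lemma in_Zinv_mult_int: assumes "in_Zinv p a" shows "in_Zinv p (of_int j * a)"
proof -
  obtain K where "pcong p K a 0" using assms unfolding in_Zinv_def by blast
  then have "a / ppow p K \<in> \<int>" unfolding pcong_def by simp
  then have "of_int j * (a / ppow p K) \<in> \<int>" by (intro Ints_mult) auto
  moreover have "(of_int j * a - 0) / ppow p K = of_int j * (a / ppow p K)" by simp
  ultimately have "(of_int j * a - 0) / ppow p K \<in> \<int>" by metis
  then show ?thesis unfolding in_Zinv_def pcong_def by blast
qed

lemma Qp_of_rat_in_Qp: assumes "p \<ge> 2" "in_Zinv p r" shows "Qp_of_rat p r \<in> Qp p"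
proof (rule QpI)
  fix k
  show "0 \<le> Qp_of_rat p r k" "Qp_of_rat p r k < ppow p k" unfolding Qp_of_rat_def using pmod_bounds[OF assms(1)] by auto
  have "pcong p k (pmod p (k+1) r) r" using pcong_mono[OF assms(1) _ pmod_pcong[OF assms(1)]] by simp
  then show "pcong p k (Qp_of_rat p r (k + 1)) (Qp_of_rat p r k)" unfolding Qp_of_rat_def
    using pmod_pcong[OF assms(1), of k r] by (meson pcong_sym pcong_trans)
next
  obtain K where K: "pcong p K r 0" using assms(2) unfolding in_Zinv_def by blast
  have "\<forall>k\<le>K. Qp_of_rat p r k = 0"
  proof (intro allI impI)
    fix k assume "k \<le> K"
    then have "pcong p k r 0" using pcong_mono[OF assms(1) _ K] by simp
    then show "Qp_of_rat p r k = 0" unfolding Qp_of_rat_def using pmod_eq_iff_pcong[OF assms(1), of 0 k r] ppow_pos[OF assms(1)] by simp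
  qed
  then show "\<exists>K. \<forall>k\<le>K. Qp_of_rat p r k = 0" by blast
qed

lemma Qp_of_rat_residue: "p \<ge> 2 \<Longrightarrow> 0 \<le> r \<Longrightarrow> r < ppow p k \<Longrightarrow> Qp_of_rat p r k = r"
  unfolding Qp_of_rat_def by (rule pmod_eq_self)

section \<open>The \<open>p\<close>-adic metric\<close>

lemma pabs_le_iff:
  assumes "p \<ge> 2" "z \<in> Qp p"
  shows "pabs p z \<le> real p powi n \<longleftrightarrow> z (- n) = 0"
proof (cases "z = pzero")
  case True then show ?thesis by (auto simp: pabs_def pzero_def)
next
  case False
  then obtain k0 where k0: "z k0 \<noteq> 0" by (auto simp: pzero_def)
  have bnd: "\<And>k. z k = 0 \<Longrightarrow> k \<le> k0"
  proof (rule ccontr)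
    fix k assume "z k = 0" "\<not> k \<le> k0"
    then have "z k0 = pzero k0" using Qp_residues_agree_down[OF assms(1,2) pzero_in_Qp[OF assms(1)], of k0 k] by (simp add: pzero_def)
    then show False using k0 by (simp add: pzero_def)
  qed
  obtain K where K: "\<forall>k\<le>K. z k = 0" using QpD(4)[OF assms(2)] by blast
  define G where "G = (GREATEST k. z k = 0)"
  have G1: "z G = 0" and G2: "\<And>k. z k = 0 \<Longrightarrow> k \<le> G"
    using int_Greatest_bounded[of "\<lambda>k. z k = 0" K k0] K bnd unfolding G_def by auto
  have "pabs p z = real p powi (- G)" using False by (simp add: pabs_def G_def)
  also have "\<dots> \<le> real p powi n \<longleftrightarrow> - G \<le> n"
  proof
    assume "real p powi (- G) \<le> real p powi n"
    moreover have "n < - G \<Longrightarrow> real p powi n < real p powi (- G)"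
      using assms(1) by (intro power_int_strict_increasing) auto
    ultimately show "- G \<le> n" by linarith
  next
    assume "- G \<le> n" then show "real p powi (- G) \<le> real p powi n" using assms(1) by (intro power_int_increasing) auto
  qed
  also have "\<dots> \<longleftrightarrow> z (- n) = 0"
  proof
    assume "- G \<le> n"
    then show "z (- n) = 0" using Qp_residues_agree_down[OF assms(1,2) pzero_in_Qp[OF assms(1)], of "-n" G] G1 by (simp add: pzero_def)
  next
    assume "z (- n) = 0" then show "- G \<le> n" using G2 by fastforce
  qed
  finally show ?thesis .
qed

lemma pabs_cases: "pabs p z = 0 \<or> (\<exists>n. pabs p z = real p powi n)"
  by (auto simp: pabs_def)

lemma pdist_le_iff:
  assumes "p \<ge> 2" "x \<in> Qp p" "y \<in> Qp p"
  shows "pdist p x y \<le> real p powi n \<longleftrightarrow> x (- n) = y (- n)"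
  unfolding pdist_def using pabs_le_iff[OF assms(1) psub_in_Qp[OF assms]] psub_eq_0_iff[OF assms] by simp

lemma pabs_eq_0_iff: "p \<ge> 2 \<Longrightarrow> pabs p z = 0 \<longleftrightarrow> z = pzero"
  by (auto simp: pabs_def)

lemma pdist_eq_0_iff:
  assumes "p \<ge> 2" "x \<in> Qp p" "y \<in> Qp p"
  shows "pdist p x y = 0 \<longleftrightarrow> x = y"
proof -
  have "pdist p x y = 0 \<longleftrightarrow> (\<forall>k. psub p x y k = 0)" unfolding pdist_def using pabs_eq_0_iff[OF assms(1)]
    by (auto simp: pzero_def)
  also have "\<dots> \<longleftrightarrow> x = y" using psub_eq_0_iff[OF assms] by auto
  finally show ?thesis .
qed

lemma pdist_nonneg: "p \<ge> 2 \<Longrightarrow> 0 \<le> pdist p x y"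
  by (auto simp: pdist_def pabs_def)

lemma pdist_cases: "pdist p x y = 0 \<or> (\<exists>n. pdist p x y = real p powi n)"
  unfolding pdist_def by (rule pabs_cases)

lemma pabs_cong: assumes "\<And>k. z k = 0 \<longleftrightarrow> w k = 0" shows "pabs p z = pabs p w"
proof -
  have e: "(\<lambda>k. z k = 0) = (\<lambda>k. w k = 0)" using assms by auto
  have "z = pzero \<longleftrightarrow> w = pzero" using assms by (auto simp: pzero_def fun_eq_iff)
  then show ?thesis unfolding pabs_def e by simp
qed

lemma pdist_commute:
  assumes "p \<ge> 2"
  shows "pdist p x y = pdist p y x"
  unfolding pdist_def by (rule pabs_cong) (use psub_eq_0_iff_pcong[OF assms] pcong_sym in blast)

lemma pdist_triangle:
  assumes "p \<ge> 2" "x \<in> Qp p" "y \<in> Qp p" "z \<in> Qp p"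
  shows "pdist p x z \<le> pdist p x y + pdist p y z"
proof -
  have n1: "0 \<le> pdist p x y" "0 \<le> pdist p y z" using pdist_nonneg[OF assms(1)] by auto
  show ?thesis
  proof (cases "pdist p x y = 0 \<and> pdist p y z = 0")
    case True
    then have "x = y" "y = z" using pdist_eq_0_iff[OF assms(1)] assms by auto
    then show ?thesis using pdist_nonneg[OF assms(1), of x z] True by simp
  next
    case False
    have "\<exists>n. max (pdist p x y) (pdist p y z) = real p powi n"
    proof (cases "pdist p x y \<le> pdist p y z")
      case True
      then have "pdist p y z \<noteq> 0" using False n1 by auto
      then show ?thesis using True pdist_cases[of p y z] by (auto simp: max_def)
    next
      case F: False
      then have "pdist p x y \<noteq> 0" using n1 by auto
      then show ?thesis using F pdist_cases[of p x y] by (auto simp: max_def)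
    qed
    then obtain n where n: "max (pdist p x y) (pdist p y z) = real p powi n" by blast
    then have "pdist p x y \<le> real p powi n" "pdist p y z \<le> real p powi n" by linarith+
    then have "x (- n) = z (- n)" using pdist_le_iff[OF assms(1,2,3)] pdist_le_iff[OF assms(1,3,4)] by simp
    then have "pdist p x z \<le> real p powi n" using pdist_le_iff[OF assms(1,2,4)] by simp
    also have "\<dots> \<le> pdist p x y + pdist p y z" using n n1 by linarith
    finally show ?thesis .
  qed
qed

lemma Metric_space_Qp: assumes "p \<ge> 2" shows "Metric_space (Qp p) (pdist p)"
proof
  show "\<And>x y. 0 \<le> pdist p x y" using pdist_nonneg[OF assms] .
  show "\<And>x y. pdist p x y = pdist p y x" using pdist_commute[OF assms] .
  show "\<And>x y. x \<in> Qp p \<Longrightarrow> y \<in> Qp p \<Longrightarrow> (pdist p x y = 0) = (x = y)" using pdist_eq_0_iff[OF assms] .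
  show "\<And>x y z. x \<in> Qp p \<Longrightarrow> y \<in> Qp p \<Longrightarrow> z \<in> Qp p \<Longrightarrow> pdist p x z \<le> pdist p x y + pdist p y z"
    using pdist_triangle[OF assms] .
qed

lemma pdist_less_iff:
  assumes "p \<ge> 2" "x \<in> Qp p" "y \<in> Qp p"
  shows "pdist p x y < real p powi (1 - m) \<longleftrightarrow> x m = y m"
proof -
  have "pdist p x y < real p powi (1 - m) \<longleftrightarrow> pdist p x y \<le> real p powi (- m)"
  proof (cases "pdist p x y = 0")
    case True then show ?thesis using assms(1) by simp
  next
    case False
    then obtain k where k: "pdist p x y = real p powi k" using pdist_cases by blast
    have "real p > 1" using assms(1) by simp
    then show ?thesis unfolding k using power_int_strict_increasing_iff[of "real p" k "1-m"] power_int_increasing_iff[of "real p" k "-m"] by linarith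
  qed
  also have "\<dots> \<longleftrightarrow> x m = y m" using pdist_le_iff[OF assms, of "-m"] by simp
  finally show ?thesis .
qed

section \<open>Balls as cylinders\<close>

definition cyl :: "nat \<Rightarrow> int \<Rightarrow> rat \<Rightarrow> (int \<Rightarrow> rat) set" where
  "cyl p m s = {y \<in> Qp p. y m = s}"

lemma pball_eq_cyl:
  assumes "p \<ge> 2" "x \<in> Qp p"
  shows "pball p x n = cyl p (- n) (x (- n))"
  using pdist_le_iff[OF assms(1,2)] unfolding pball_def cyl_def by auto

lemma Zp_eq_cyl: "p \<ge> 2 \<Longrightarrow> Zp p = cyl p 0 0"
  unfolding Zp_def cyl_def using pabs_le_iff[of p _ 0] by auto

lemma cyl_subset_Qp: "cyl p m s \<subseteq> Qp p" by (auto simp: cyl_def)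

lemma cyl_neg_empty: "p \<ge> 2 \<Longrightarrow> cyl p m (-1) = {}"
proof -
  { fix y assume "y \<in> Qp p" "y m = -1" then have False using QpD(1)[of y p m] by simp }
  then show ?thesis unfolding cyl_def by auto
qed

lemma cyl_subset_cyl:
  assumes p: "p \<ge> 2" and mm: "m \<le> m'" and y: "y \<in> cyl p m' s'"
  shows "cyl p m' s' \<subseteq> cyl p m (y m)"
proof
  fix z assume z: "z \<in> cyl p m' s'"
  then have "z m = y m" using Qp_residues_agree_down[OF p, of z y m m'] y mm by (auto simp: cyl_def)
  then show "z \<in> cyl p m (y m)" using z by (auto simp: cyl_def)
qed

lemma cyl_subset_or_disjoint:
  assumes p: "p \<ge> 2" and mm: "m \<le> m'"
  shows "cyl p m' s' \<subseteq> cyl p m s \<or> cyl p m s \<inter> cyl p m' s' = {}"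
proof (cases "cyl p m' s' = {}")
  case True then show ?thesis by simp
next
  case False
  then obtain y where y: "y \<in> cyl p m' s'" by blast
  show ?thesis
  proof (cases "y m = s")
    case True then show ?thesis using cyl_subset_cyl[OF p mm y] by simp
  next
    case False
    then have "cyl p m s \<inter> cyl p m (y m) = {}" by (auto simp: cyl_def)
    then show ?thesis using cyl_subset_cyl[OF p mm y] by blast
  qed
qed

lemma cyl_residue_up:
  assumes p: "p \<ge> 2" and x: "x \<in> Qp p" and mm: "m \<le> m'" and y: "y \<in> cyl p m (x m)"
  shows "\<exists>j < p ^ nat (m' - m). y m' = x m + of_nat j * ppow p m"
proof -
  have Pm: "ppow p m > 0" using ppow_pos[OF p] .
  have yQ: "y \<in> Qp p" and ym: "y m = x m" using y unfolding cyl_def by auto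
  have "pcong p m (y m') (x m)" using Qp_pcong_residues[OF p yQ mm] ym by simp
  then obtain z where z: "(y m' - x m) / ppow p m = of_int z" unfolding pcong_def by (auto elim: Ints_cases)
  have rz: "y m' = x m + of_int z * ppow p m" using z Pm p by (simp add: divide_eq_eq)
  have b1: "0 \<le> y m'" "y m' < ppow p m'" using QpD[OF yQ] by auto
  have b2: "0 \<le> x m" "x m < ppow p m" using QpD[OF x] by auto
  have "(-1) * ppow p m < of_int z * ppow p m" using rz b1 b2 by simp
  then have "(-1::rat) < of_int z" using Pm mult_less_cancel_right_pos by blast
  then have z0: "0 \<le> z" by linarith
  have "of_int z * ppow p m < ppow p m * of_nat (p ^ nat (m' - m))"
    using rz b1 b2 ppow_split[OF p mm] by linarith
  then have "of_int z * ppow p m < of_nat (p ^ nat (m' - m)) * ppow p m" by (simp add: mult.commute)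
  then have "(of_int z :: rat) < of_nat (p ^ nat (m' - m))" using Pm mult_less_cancel_right_pos by blast
  then have "nat z < p ^ nat (m' - m)" using z0 by (metis nat_less_iff of_int_less_iff of_int_of_nat_eq)
  moreover have "y m' = x m + of_nat (nat z) * ppow p m" using rz z0 by simp
  ultimately show ?thesis by blast
qed

lemma cyl_residue_down:
  assumes p: "p \<ge> 2" and x: "x \<in> Qp p" and mm: "m \<le> m'" and j: "j < p ^ nat (m' - m)"
  shows "x m + of_nat j * ppow p m \<in> (\<lambda>y. y m') ` cyl p m (x m)"
proof -
  define r where "r = x m + of_nat j * ppow p m"
  have b2: "0 \<le> x m" "x m < ppow p m" using QpD[OF x] by auto
  have isr: "in_Zinv p r" unfolding r_def
    using in_Zinv_add[OF p Qp_residue_in_Zinv[OF p x] in_Zinv_mult_int[OF ppow_in_Zinv[OF p], of "int j"]] by simp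
  have r0: "0 \<le> r" using b2 ppow_pos[OF p, of m] unfolding r_def by simp
  have "(of_nat (j + 1) :: rat) \<le> of_nat (p ^ nat (m' - m))" using j by (intro of_nat_mono) simp
  then have "of_nat j * ppow p m \<le> (of_nat (p ^ nat (m' - m)) - 1) * ppow p m"
    using ppow_pos[OF p, of m] by (intro mult_right_mono) simp_all
  then have r1: "r < ppow p m'" using b2 ppow_split[OF p mm] unfolding r_def by (simp add: algebra_simps)
  define y where "y = Qp_of_rat p r"
  have yQ: "y \<in> Qp p" unfolding y_def using Qp_of_rat_in_Qp[OF p isr] .
  have "y m' = r" unfolding y_def using Qp_of_rat_residue[OF p r0 r1] .
  moreover have "pmod p m r = x m"
    using pmod_eq_iff_pcong[OF p b2] pcong_add_multiple[of p m "x m" "int j"] unfolding r_def by simp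
  then have "y m = x m" unfolding y_def Qp_of_rat_def by simp
  ultimately show ?thesis using yQ unfolding r_def cyl_def by (intro image_eqI[where x = y]) auto
qed

lemma cyl_residues:
  assumes p: "p \<ge> 2" and x: "x \<in> Qp p" and mm: "m \<le> m'"
  shows "(\<lambda>y. y m') ` cyl p m (x m) = (\<lambda>j. x m + of_nat j * ppow p m) ` {..< p ^ nat (m' - m)}"
  using cyl_residue_up[OF p x mm] cyl_residue_down[OF p x mm] by fastforce

lemma card_cyl_residues:
  assumes p: "p \<ge> 2" and x: "x \<in> Qp p" and mm: "m \<le> m'"
  shows "card ((\<lambda>y. y m') ` cyl p m (x m)) = p ^ nat (m' - m)"
proof -
  have "inj_on (\<lambda>j. x m + of_nat j * ppow p m) {..< p ^ nat (m' - m)}"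
    using ppow_pos[OF p, of m] p by (intro inj_onI) simp
  then show ?thesis unfolding cyl_residues[OF assms] by (simp add: card_image)
qed

lemma finite_cyl_residues:
  assumes p: "p \<ge> 2"
  shows "finite ((\<lambda>y. y m') ` cyl p m s)"
proof (cases "cyl p m s = {}")
  case True then show ?thesis by simp
next
  case False
  then obtain x where x: "x \<in> cyl p m s" by blast
  then have xQ: "x \<in> Qp p" and e: "cyl p m s = cyl p m (x m)" by (auto simp: cyl_def)
  show ?thesis
  proof (cases "m \<le> m'")
    case True then show ?thesis unfolding e cyl_residues[OF p xQ True] by simp
  next
    case False
    have "(\<lambda>y. y m') ` cyl p m (x m) \<subseteq> {x m'}"
      using Qp_residues_agree_down[OF p _ xQ, of _ m' m] False unfolding cyl_def by auto
    then show ?thesis unfolding e using finite_subset by blast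
  qed
qed

lemma residues_disjoint_if_disjoint:
  assumes p: "p \<ge> 2" and "m \<le> L" "m' \<le> L" and dj: "cyl p m s \<inter> cyl p m' s' = {}"
  shows "(\<lambda>y. y L) ` cyl p m s \<inter> (\<lambda>y. y L) ` cyl p m' s' = {}"
proof (rule ccontr)
  assume "(\<lambda>y. y L) ` cyl p m s \<inter> (\<lambda>y. y L) ` cyl p m' s' \<noteq> {}"
  then obtain z w where zw: "z \<in> cyl p m s" "w \<in> cyl p m' s'" "z L = w L" by auto
  then have "w \<in> cyl p L (z L)" "z \<in> cyl p L (z L)" by (auto simp: cyl_def)
  then have "w \<in> cyl p m (z m)" using cyl_subset_cyl[OF p \<open>m \<le> L\<close>] by blast
  then show False using zw dj by (auto simp: cyl_def)
qed

lemma cyl_level_unique: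
  assumes p: "p \<ge> 2" and ne: "cyl p m s \<noteq> {}" and eq: "cyl p m s = cyl p m' s'" and mm: "m \<le> m'"
  shows "m = m'"
proof -
  obtain y where y: "y \<in> cyl p m s" using ne by blast
  then have yQ: "y \<in> Qp p" and e: "cyl p m s = cyl p m (y m)" by (auto simp: cyl_def)
  have "card ((\<lambda>z. z m') ` cyl p m (y m)) = p ^ nat (m' - m)" by (rule card_cyl_residues[OF p yQ mm])
  moreover have "card ((\<lambda>z. z m') ` cyl p m (y m)) \<le> 1"
  proof -
    have "(\<lambda>z. z m') ` cyl p m (y m) \<subseteq> {s'}" using e eq by (auto simp: cyl_def)
    then have "card ((\<lambda>z. z m') ` cyl p m (y m)) \<le> card {s'}" by (rule card_mono[rotated]) simp
    then show ?thesis by simp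
  qed
  ultimately have le1: "p ^ nat (m' - m) \<le> 1" by simp
  have "nat (m' - m) = 0"
  proof (rule ccontr)
    assume "nat (m' - m) \<noteq> 0"
    then have "p ^ 1 \<le> p ^ nat (m' - m)" using p by (intro power_increasing) auto
    then show False using le1 p by simp
  qed
  then show ?thesis using mm by simp
qed

lemma padd_image_cyl: assumes p: "p \<ge> 2" and x: "x \<in> Qp p"
  shows "padd p x ` cyl p L 0 = cyl p L (x L)"
proof
  show "padd p x ` cyl p L 0 \<subseteq> cyl p L (x L)"
  proof
    fix z assume "z \<in> padd p x ` cyl p L 0"
    then obtain y where y: "y \<in> Qp p" "y L = 0" "z = padd p x y" by (auto simp: cyl_def)
    have "z L = pmod p L (x L)" using y unfolding padd_def by simp
    also have "\<dots> = x L" using pmod_eq_self[OF p QpD(1,2)[OF x]] .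
    finally show "z \<in> cyl p L (x L)" using padd_in_Qp[OF p x y(1)] y(3) by (simp add: cyl_def)
  qed
  show "cyl p L (x L) \<subseteq> padd p x ` cyl p L 0"
  proof
    fix z assume z: "z \<in> cyl p L (x L)"
    then have zQ: "z \<in> Qp p" and zL: "z L = x L" by (auto simp: cyl_def)
    define y where "y = padd p (pneg p x) z"
    have yQ: "y \<in> Qp p" unfolding y_def by (rule padd_in_Qp[OF p pneg_in_Qp[OF p x] zQ])
    have "pcong p L (y L) (pneg p x L + z L)" unfolding y_def by (rule padd_pcong[OF p])
    moreover have "pcong p L (pneg p x L + z L) (- x L + z L)" by (rule pcong_add[OF pneg_pcong[OF p] pcong_refl])
    ultimately have "pcong p L (y L) 0" using zL pcong_trans by fastforce
    then have "y L = 0" using pcong_residue_unique[OF p _ QpD(1,2)[OF yQ, of L], of 0] ppow_pos[OF p, of L] by simp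
    moreover have "z = padd p x y" unfolding y_def using padd_pneg_cancel(1)[OF p x zQ] by simp
    ultimately show "z \<in> padd p x ` cyl p L 0" using yQ by (auto simp: cyl_def)
  qed
qed

lemma padd_in_cyl_iff:
  assumes p: "p \<ge> 2" and x: "x \<in> Qp p" and t: "t \<in> Qp p" and z: "z \<in> Qp p"
  shows "padd p t z \<in> cyl p L (x L) \<longleftrightarrow> t L = psub p x z L"
proof -
  have "padd p t z \<in> cyl p L (x L) \<longleftrightarrow> pmod p L (t L + z L) = x L"
    using padd_in_Qp[OF p t z] unfolding cyl_def padd_def by simp
  also have "\<dots> \<longleftrightarrow> pcong p L (t L + z L) (x L)" by (rule pmod_eq_iff_pcong[OF p QpD(1,2)[OF x]])
  also have "\<dots> \<longleftrightarrow> pcong p L (t L) (x L - z L)" unfolding pcong_def by (simp add: algebra_simps)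
  also have "\<dots> \<longleftrightarrow> pcong p L (t L) (psub p x z L)"
    using psub_pcong[OF p, of L x z] by (meson pcong_sym pcong_trans)
  also have "\<dots> \<longleftrightarrow> t L = psub p x z L"
    using pcong_residue_unique[OF p _ QpD(1,2)[OF t] QpD(1,2)[OF psub_in_Qp[OF p x z]]] by auto
  finally show ?thesis .
qed

lemma psub_residue_cyl_zero:
  assumes p: "p \<ge> 2" and x: "x \<in> Qp p" and z: "z \<in> cyl p L 0"
  shows "psub p x z L = x L"
proof -
  have zQ: "z \<in> Qp p" and zL: "z L = 0" using z unfolding cyl_def by auto
  have "pcong p L (psub p x z L) (x L)" using psub_pcong[OF p, of L x z] zL by simp
  then show ?thesis using pcong_residue_unique[OF p _ QpD(1,2)[OF psub_in_Qp[OF p x zQ]] QpD(1,2)[OF x]] by simp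
qed

lemma padd_preimage_cyl:
  assumes p: "p \<ge> 2" and t: "t \<in> Qp p" and w: "w \<in> Qp p"
  shows "{y \<in> Qp p. padd p t y \<in> cyl p m (w m)} = cyl p m (pmod p m (w m - t m))"
proof -
  have "padd p t y \<in> cyl p m (w m) \<longleftrightarrow> y m = pmod p m (w m - t m)" if y: "y \<in> Qp p" for y
  proof -
    have "padd p t y \<in> cyl p m (w m) \<longleftrightarrow> pmod p m (t m + y m) = w m"
      using padd_in_Qp[OF p t y] by (simp add: cyl_def padd_def)
    also have "\<dots> \<longleftrightarrow> pcong p m (t m + y m) (w m)" using pmod_eq_iff_pcong[OF p QpD(1,2)[OF w]] .
    also have "\<dots> \<longleftrightarrow> pcong p m (y m) (w m - t m)" by (rule pcong_add_left_iff)
    also have "\<dots> \<longleftrightarrow> pmod p m (w m - t m) = y m"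
      using pmod_eq_iff_pcong[OF p QpD(1,2)[OF y], of m "w m - t m"] pcong_sym by blast
    finally show ?thesis by auto
  qed
  then show ?thesis unfolding cyl_def by auto
qed

lemma incseq_cyl_zero:
  assumes p: "p \<ge> 2"
  shows "incseq (\<lambda>k::nat. cyl p (- int k) 0)"
proof (rule incseq_SucI, rule subsetI)
  fix k z assume "z \<in> cyl p (- int k) 0"
  then have zQ: "z \<in> Qp p" and "z (- int k) = pzero (- int k)" by (auto simp: cyl_def pzero_def)
  then have "z (- int (Suc k)) = pzero (- int (Suc k))"
    using Qp_residues_agree_down[OF p zQ pzero_in_Qp[OF p], of "- int (Suc k)" "- int k"] by simp
  then show "z \<in> cyl p (- int (Suc k)) 0" using zQ by (simp add: cyl_def pzero_def)
qed

lemma Union_cyl_zero: "(\<Union>k::nat. cyl p (- int k) 0) = Qp p"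
proof
  show "Qp p \<subseteq> (\<Union>k::nat. cyl p (- int k) 0)"
  proof
    fix z assume zQ: "z \<in> Qp p"
    then obtain K where "\<forall>k\<le>K. z k = 0" using QpD(4) by blast
    then have "z \<in> cyl p (- int (nat (- K))) 0" using zQ by (simp add: cyl_def)
    then show "z \<in> (\<Union>k::nat. cyl p (- int k) 0)" by blast
  qed
qed (auto simp: cyl_def)

section \<open>Topology of \<open>\<rat>\<^sub>p\<close>\<close>

lemma cyl_eq_mball:
  assumes "p \<ge> 2" "x \<in> Qp p"
  shows "cyl p m (x m) = Metric_space.mball (Qp p) (pdist p) x (real p powi (1 - m))"
  using pdist_less_iff[OF assms(1,2)] assms(2) Metric_space.in_mball[OF Metric_space_Qp[OF assms(1)]]
  unfolding cyl_def by auto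

lemma cyl_eq_mcball:
  assumes "p \<ge> 2" "x \<in> Qp p"
  shows "cyl p m (x m) = Metric_space.mcball (Qp p) (pdist p) x (real p powi (- m))"
  using pdist_le_iff[OF assms(1,2), of _ "-m"] assms(2) Metric_space.in_mcball[OF Metric_space_Qp[OF assms(1)]]
  unfolding cyl_def by auto

lemma openin_cyl:
  assumes "p \<ge> 2" shows "openin (ptop p) (cyl p m s)"
proof (cases "cyl p m s = {}")
  case True then show ?thesis by simp
next
  case False
  then obtain x where x: "x \<in> cyl p m s" by blast
  then have xQ: "x \<in> Qp p" and e: "cyl p m s = cyl p m (x m)" by (auto simp: cyl_def)
  show ?thesis unfolding e cyl_eq_mball[OF assms xQ] ptop_def
    using Metric_space.openin_mball[OF Metric_space_Qp[OF assms]] .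
qed

lemma closedin_cyl:
  assumes "p \<ge> 2" shows "closedin (ptop p) (cyl p m s)"
proof (cases "cyl p m s = {}")
  case True then show ?thesis by simp
next
  case False
  then obtain x where x: "x \<in> cyl p m s" by blast
  then have xQ: "x \<in> Qp p" and e: "cyl p m s = cyl p m (x m)" by (auto simp: cyl_def)
  have c: "closedin (Metric_space.mtopology (Qp p) (pdist p)) (Metric_space.mcball (Qp p) (pdist p) x (real p powi (- m)))"
    by (rule Metric_space.closedin_mcball[OF Metric_space_Qp[OF assms]])
  have eq2: "cyl p m (x m) = Metric_space.mcball (Qp p) (pdist p) x (real p powi (- m))"
    by (rule cyl_eq_mcball[OF assms xQ])
  show ?thesis unfolding ptop_def e eq2 by (rule c)
qed

lemma exists_power_int_less: assumes p: "p \<ge> 2" and e: "(\<epsilon>::real) > 0" shows "\<exists>k. real p powi k < \<epsilon>"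
proof -
  have "inverse (real p) < 1" using p by (simp add: inverse_eq_divide)
  then obtain n where n: "inverse (real p) ^ n < \<epsilon>" using real_arch_pow_inv[OF e] by blast
  have "real p powi (- int n) = inverse (real p) ^ n"
    by (simp add: power_int_minus power_inverse)
  then show ?thesis using n by metis
qed

lemma exists_level_less: assumes p: "p \<ge> 2" and e: "(\<epsilon>::real) > 0" shows "\<exists>L\<ge>m. real p powi (1 - L) < \<epsilon>"
proof -
  obtain k where k: "real p powi k < \<epsilon>" using exists_power_int_less[OF p e] by blast
  define L where "L = max m (1 - k)"
  have "real p powi (1 - L) \<le> real p powi k" using p unfolding L_def by (intro power_int_increasing) auto
  then show ?thesis using k unfolding L_def by (intro exI[of _ "max m (1 - k)"]) auto
qed

lemma MCauchy_residues_eventually_constant: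
  assumes p: "p \<ge> 2" and C: "Metric_space.MCauchy (Qp p) (pdist p) \<sigma>"
  shows "\<exists>N. \<forall>n\<ge>N. \<sigma> n k = \<sigma> N k"
proof -
  interpret MQ: Metric_space "Qp p" "pdist p" by (rule Metric_space_Qp[OF p])
  have rng: "\<And>n. \<sigma> n \<in> Qp p" using C unfolding MQ.MCauchy_def by auto
  have "real p powi (1 - k) > 0" using p by simp
  then obtain N where N: "\<And>n n'. N \<le> n \<Longrightarrow> N \<le> n' \<Longrightarrow> pdist p (\<sigma> n) (\<sigma> n') < real p powi (1 - k)"
    using C unfolding MQ.MCauchy_def by meson
  then have "\<forall>n\<ge>N. \<sigma> n k = \<sigma> N k" using pdist_less_iff[OF p rng rng] by blast
  then show ?thesis by blast
qed

lemma eventual_residues_in_Qp: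
  fixes \<sigma> :: "nat \<Rightarrow> int \<Rightarrow> rat" and N :: "int \<Rightarrow> nat"
  assumes p: "p \<ge> 2" and rng: "\<And>n. \<sigma> n \<in> Qp p" and N: "\<And>n k. N k \<le> n \<Longrightarrow> \<sigma> n k = y k"
  shows "y \<in> Qp p"
proof (rule QpI)
  fix k
  have "\<sigma> (N k) k = y k" by (rule N) simp
  then show "0 \<le> y k" "y k < ppow p k" using QpD(1,2)[OF rng[of "N k"], of k] by simp_all
  have "pcong p k (\<sigma> (max (N k) (N (k+1))) (k+1)) (\<sigma> (max (N k) (N (k+1))) k)" by (rule QpD(3)[OF rng])
  then show "pcong p k (y (k + 1)) (y k)" using N by simp
next
  obtain K0 where K0: "pcong p K0 (y 0) 0"
    using Qp_residue_in_Zinv[OF p rng, of "N 0" 0] N[of 0 "N 0"] unfolding in_Zinv_def by auto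
  have "y k = 0" if k: "k \<le> min K0 0" for k
  proof -
    define n where "n = max (N k) (N 0)"
    have "y k = pmod p k (y 0)" using Qp_residue_eq_pmod[OF p rng[of n], of k 0] k N unfolding n_def by simp
    moreover have "pcong p k (y 0) 0" using pcong_mono[OF p _ K0, of k] k by simp
    ultimately show "y k = 0" using pmod_eq_iff_pcong[OF p, of 0 k "y 0"] ppow_pos[OF p] by simp
  qed
  then show "\<exists>K. \<forall>k\<le>K. y k = 0" by blast
qed

lemma mcomplete_Qp: assumes p: "p \<ge> 2" shows "Metric_space.mcomplete (Qp p) (pdist p)"
proof -
  interpret MQ: Metric_space "Qp p" "pdist p" by (rule Metric_space_Qp[OF p])
  show ?thesis unfolding MQ.mcomplete_def
  proof (intro allI impI)
    fix \<sigma> assume C: "MQ.MCauchy \<sigma>"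
    then have rng: "\<And>n. \<sigma> n \<in> Qp p" unfolding MQ.MCauchy_def by auto
    obtain N where "\<forall>k. \<forall>n\<ge>N k. \<sigma> n k = \<sigma> (N k) k"
      using MCauchy_residues_eventually_constant[OF p C] by metis
    then have N: "\<And>n k. N k \<le> n \<Longrightarrow> \<sigma> n k = \<sigma> (N k) k" by blast
    define y where "y k = \<sigma> (N k) k" for k
    have yQ: "y \<in> Qp p"
      by (rule eventual_residues_in_Qp[OF p rng, where N = N]) (unfold y_def, rule N)
    have "limitin MQ.mtopology \<sigma> y sequentially"
      unfolding MQ.limit_metric_sequentially
    proof (intro conjI yQ allI impI)
      fix \<epsilon> :: real assume "\<epsilon> > 0"
      then obtain k where k: "real p powi (1 - k) < \<epsilon>" using exists_level_less[OF p, of \<epsilon> 0] by blast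
      have "pdist p (\<sigma> n) y < \<epsilon>" if "N k \<le> n" for n
        using pdist_less_iff[OF p rng yQ, of n k] N[OF that] k unfolding y_def by simp
      then show "\<exists>M. \<forall>n\<ge>M. \<sigma> n \<in> Qp p \<and> pdist p (\<sigma> n) y < \<epsilon>" using rng by blast
    qed
    then show "\<exists>x. limitin MQ.mtopology \<sigma> x sequentially" by blast
  qed
qed

lemma mtotally_bounded_cyl: assumes p: "p \<ge> 2" shows "Metric_space.mtotally_bounded (Qp p) (pdist p) (cyl p m s)"
proof -
  interpret MQ: Metric_space "Qp p" "pdist p" by (rule Metric_space_Qp[OF p])
  show ?thesis unfolding MQ.mtotally_bounded_def
  proof (intro allI impI)
    fix \<epsilon> :: real assume "\<epsilon> > 0"
    then obtain L where L: "real p powi (1 - L) < \<epsilon>" using exists_level_less[OF p, of \<epsilon> 0] by blast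
    define S where "S = cyl p m s"
    define R where "R = (\<lambda>y. y L) ` S"
    define rep where "rep r = (SOME y. y \<in> S \<and> y L = r)" for r
    have finR: "finite R" unfolding R_def S_def using finite_cyl_residues[OF p] .
    have rep: "rep r \<in> S \<and> rep r L = r" if "r \<in> R" for r
    proof -
      have "\<exists>y. y \<in> S \<and> y L = r" using that unfolding R_def by auto
      then show ?thesis unfolding rep_def by (rule someI_ex)
    qed
    have SQ: "S \<subseteq> Qp p" unfolding S_def cyl_def by auto
    have "S \<subseteq> (\<Union>x\<in>rep ` R. MQ.mball x \<epsilon>)"
    proof
      fix z assume z: "z \<in> S"
      then have zR: "z L \<in> R" unfolding R_def by auto
      have w: "rep (z L) \<in> S" "rep (z L) L = z L" using rep[OF zR] by auto
      then have "pdist p (rep (z L)) z < real p powi (1 - L)" using pdist_less_iff[OF p, of "rep (z L)" z L] SQ z by auto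
      then have "z \<in> MQ.mball (rep (z L)) \<epsilon>" using L w SQ z by auto
      then show "z \<in> (\<Union>x\<in>rep ` R. MQ.mball x \<epsilon>)" using zR by blast
    qed
    moreover have "rep ` R \<subseteq> S" using rep by auto
    ultimately show "\<exists>K. finite K \<and> K \<subseteq> cyl p m s \<and> cyl p m s \<subseteq> (\<Union>x\<in>K. MQ.mball x \<epsilon>)"
      using finR unfolding S_def by (intro exI[of _ "rep ` R"]) auto
  qed
qed

lemma compactin_cyl: assumes p: "p \<ge> 2" shows "compactin (ptop p) (cyl p m s)"
proof -
  interpret MQ: Metric_space "Qp p" "pdist p" by (rule Metric_space_Qp[OF p])
  have "compactin MQ.mtopology (MQ.mtopology closure_of (cyl p m s))"
    using MQ.mtotally_bounded_eq_compact_closure_of[OF mcomplete_Qp[OF p]] mtotally_bounded_cyl[OF p] by blast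
  moreover have "MQ.mtopology closure_of (cyl p m s) = cyl p m s"
    using closure_of_closedin closedin_cyl[OF p] unfolding ptop_def by blast
  ultimately show ?thesis unfolding ptop_def by simp
qed

lemma compactin_pball: assumes p: "p \<ge> 2" and x: "x \<in> Qp p" shows "compactin (ptop p) (pball p x n)"
  unfolding pball_eq_cyl[OF p x] by (rule compactin_cyl[OF p])

lemma finite_pball_Int: assumes p: "p \<ge> 2" "x \<in> Qp p" "locally_finite p T"
  shows "finite (pball p x n \<inter> T)"
  using assms compactin_pball unfolding locally_finite_def by blast

lemma countable_locally_finite: assumes p: "p \<ge> 2" and TQ: "T \<subseteq> Qp p" and lf: "locally_finite p T"
  shows "countable T"
proof -
  have "T = (\<Union>r. cyl p 0 r \<inter> T)" using TQ by (auto simp: cyl_def)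
  moreover have "countable (\<Union>r. cyl p 0 r \<inter> T)"
    using lf compactin_cyl[OF p] unfolding locally_finite_def by (intro countable_UN) (auto intro: countable_finite)
  ultimately show ?thesis by simp
qed

lemma topspace_ptop: "p \<ge> 2 \<Longrightarrow> topspace (ptop p) = Qp p"
  unfolding ptop_def using Metric_space.topspace_mtopology[OF Metric_space_Qp] by blast

definition Cyls :: "nat \<Rightarrow> (int \<Rightarrow> rat) set set" where
  "Cyls p = (\<lambda>(m, s). cyl p m s) ` UNIV"

lemma countable_Cyls: "countable (Cyls p)"
  unfolding Cyls_def by simp

lemma cyl_in_Cyls[simp]: "cyl p m s \<in> Cyls p"
  unfolding Cyls_def by auto

lemma CylsE: "C \<in> Cyls p \<Longrightarrow> \<exists>m s. C = cyl p m s"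
  unfolding Cyls_def by auto

lemma Cyls_subset_Pow: "Cyls p \<subseteq> Pow (Qp p)"
  using cyl_subset_Qp unfolding Cyls_def by auto

lemma openin_eq_Union_Cyls:
  assumes p: "p \<ge> 2" and U: "openin (ptop p) U"
  shows "U = \<Union>{C \<in> Cyls p. C \<subseteq> U}"
proof -
  interpret MQ: Metric_space "Qp p" "pdist p" by (rule Metric_space_Qp[OF p])
  have "x \<in> \<Union>{C \<in> Cyls p. C \<subseteq> U}" if x: "x \<in> U" for x
  proof -
    have xQ: "x \<in> Qp p" using U x MQ.openin_mtopology unfolding ptop_def by blast
    obtain r where r: "r > 0" "MQ.mball x r \<subseteq> U" using U x MQ.openin_mtopology unfolding ptop_def by blast
    obtain m where m: "real p powi (1 - m) < r" using exists_level_less[OF p r(1), of 0] by blast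
    have "cyl p m (x m) \<subseteq> U" unfolding cyl_eq_mball[OF p xQ] using r(2) m MQ.mball_subset_concentric[of "real p powi (1 - m)" r x] by auto
    moreover have "x \<in> cyl p m (x m)" using xQ by (simp add: cyl_def)
    ultimately show ?thesis using cyl_in_Cyls[of p m "x m"] by blast
  qed
  then show ?thesis by blast
qed

lemma compactin_covered_by_finite_Cyls:
  assumes p: "p \<ge> 2" and K: "compactin (ptop p) K"
  obtains F where "finite F" "F \<subseteq> Cyls p" "K \<subseteq> \<Union>F"
proof -
  have KQ: "K \<subseteq> Qp p" using compactin_subset_topspace[OF K] topspace_ptop[OF p] by simp
  define U where "U = (\<lambda>y. cyl p 0 (y 0)) ` K"
  have "\<forall>B\<in>U. openin (ptop p) B" unfolding U_def using openin_cyl[OF p] by blast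
  moreover have "K \<subseteq> \<Union>U" unfolding U_def using KQ by (auto simp: cyl_def)
  ultimately obtain F where "finite F" "F \<subseteq> U" "K \<subseteq> \<Union>F"
    using K unfolding compactin_def by meson
  moreover have "U \<subseteq> Cyls p" unfolding U_def by auto
  ultimately show thesis using that by blast
qed

lemma sigma_Cyls_eq:
  assumes p: "p \<ge> 2"
  shows "sigma_sets (Qp p) (Cyls p) = sigma_sets (Qp p) {U. openin (ptop p) U}"
proof
  show "sigma_sets (Qp p) (Cyls p) \<subseteq> sigma_sets (Qp p) {U. openin (ptop p) U}"
    by (rule sigma_sets_mono') (use openin_cyl[OF p] CylsE in fastforce)
  have sa: "sigma_algebra (Qp p) (sigma_sets (Qp p) (Cyls p))"
    by (rule sigma_algebra_sigma_sets[OF Cyls_subset_Pow])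
  show "sigma_sets (Qp p) {U. openin (ptop p) U} \<subseteq> sigma_sets (Qp p) (Cyls p)"
  proof (rule sigma_sets_mono, rule subsetI)
    fix U assume "U \<in> {U. openin (ptop p) U}"
    then have U: "openin (ptop p) U" by simp
    have "\<Union>{C \<in> Cyls p. C \<subseteq> U} \<in> sigma_sets (Qp p) (Cyls p)"
      by (rule sigma_algebra.countable_Union[OF sa]) (auto intro: countable_subset[OF _ countable_Cyls])
    then show "U \<in> sigma_sets (Qp p) (Cyls p)" using openin_eq_Union_Cyls[OF p U] by simp
  qed
qed

section \<open>Haar measure\<close>

definition cyl_level :: "nat \<Rightarrow> (int \<Rightarrow> rat) set \<Rightarrow> int" where
  "cyl_level p C = (THE m. \<exists>s. C = cyl p m s)"

lemma cyl_level_cyl: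
  assumes p: "p \<ge> 2" and ne: "cyl p m s \<noteq> {}"
  shows "cyl_level p (cyl p m s) = m"
  unfolding cyl_level_def
proof (rule the_equality)
  show "\<exists>s'. cyl p m s = cyl p m s'" by blast
  fix m' assume "\<exists>s'. cyl p m s = cyl p m' s'"
  then obtain s' where e: "cyl p m s = cyl p m' s'" by blast
  show "m' = m"
  proof (cases "m \<le> m'")
    case True then show ?thesis using cyl_level_unique[OF p ne e] by simp
  next
    case False
    have "cyl p m' s' \<noteq> {}" using ne e by simp
    then show ?thesis using cyl_level_unique[OF p _ e[symmetric]] False by simp
  qed
qed

definition cyl_measure :: "nat \<Rightarrow> (int \<Rightarrow> rat) set \<Rightarrow> ennreal" where
  "cyl_measure p C = (if C = {} then 0 else ennreal (real p powi (- cyl_level p C)))"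

lemma cyl_measure_count:
  assumes p: "p \<ge> 2" and mL: "m \<le> L"
  shows "cyl_measure p (cyl p m s) = ennreal (real (card ((\<lambda>y. y L) ` cyl p m s)) * real p powi (- L))"
proof (cases "cyl p m s = {}")
  case True then show ?thesis by (simp add: cyl_measure_def)
next
  case False
  then obtain y where y: "y \<in> cyl p m s" by blast
  then have yQ: "y \<in> Qp p" and e: "cyl p m s = cyl p m (y m)" by (auto simp: cyl_def)
  have c: "card ((\<lambda>y. y L) ` cyl p m s) = p ^ nat (L - m)" unfolding e by (rule card_cyl_residues[OF p yQ mL])
  have "real (p ^ nat (L - m)) * real p powi (- L) = real p powi (L - m) * real p powi (- L)"
    using mL by (simp add: power_int_def)
  also have "\<dots> = real p powi (- m)" using p by (simp flip: power_int_add)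
  finally show ?thesis unfolding c cyl_measure_def using cyl_level_cyl[OF p False] False by simp
qed

lemma Int_Cyls:
  assumes p: "p \<ge> 2" and C: "C \<in> Cyls p" and D: "D \<in> Cyls p"
  shows "C \<inter> D \<in> Cyls p"
proof -
  obtain m s m' s' where e: "C = cyl p m s" "D = cyl p m' s'" using CylsE[OF C] CylsE[OF D] by metis
  have "{} \<in> Cyls p" using cyl_neg_empty[OF p] cyl_in_Cyls by metis
  moreover have "C \<subseteq> D \<or> D \<subseteq> C \<or> C \<inter> D = {}"
    using cyl_subset_or_disjoint[OF p, of m m' s' s] cyl_subset_or_disjoint[OF p, of m' m s s'] e
    by (cases "m \<le> m'") auto
  ultimately show ?thesis using C D by (metis Int_absorb1 Int_absorb2)
qed

lemma cyl_diff_eq_Union: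
  assumes p: "p \<ge> 2" and mm: "m \<le> m'"
  shows "cyl p m s - cyl p m' s' = \<Union> (cyl p m' ` ((\<lambda>y. y m') ` cyl p m s - {s'}))"
proof
  show "cyl p m s - cyl p m' s' \<subseteq> \<Union> (cyl p m' ` ((\<lambda>y. y m') ` cyl p m s - {s'}))"
    by (auto simp: cyl_def)
  show "\<Union> (cyl p m' ` ((\<lambda>y. y m') ` cyl p m s - {s'})) \<subseteq> cyl p m s - cyl p m' s'"
  proof
    fix z assume "z \<in> \<Union> (cyl p m' ` ((\<lambda>y. y m') ` cyl p m s - {s'}))"
    then obtain y where y: "y \<in> cyl p m s" "y m' \<noteq> s'" "z \<in> cyl p m' (y m')" by auto
    have "y \<in> cyl p m' (y m')" using y(1) by (simp add: cyl_def)
    then have "z \<in> cyl p m (y m)" using cyl_subset_cyl[OF p mm] y(3) by blast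
    then show "z \<in> cyl p m s - cyl p m' s'" using y by (auto simp: cyl_def)
  qed
qed

lemma Diff_Cyls:
  assumes p: "p \<ge> 2" and C: "C \<in> Cyls p" and D: "D \<in> Cyls p"
  shows "\<exists>F\<subseteq>Cyls p. finite F \<and> disjoint F \<and> C - D = \<Union>F"
proof -
  obtain m s m' s' where e: "C = cyl p m s" "D = cyl p m' s'" using CylsE[OF C] CylsE[OF D] by metis
  show ?thesis
  proof (cases "m' \<le> m")
    case True
    then have "C \<subseteq> D \<or> C \<inter> D = {}" using cyl_subset_or_disjoint[OF p True, of s s'] e by auto
    then show ?thesis
    proof
      assume "C \<subseteq> D" then show ?thesis by (intro exI[of _ "{}"]) auto
    next
      assume "C \<inter> D = {}" then show ?thesis using C by (intro exI[of _ "{C}"]) auto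
    qed
  next
    case False
    then have mm: "m \<le> m'" by simp
    define F where "F = cyl p m' ` ((\<lambda>y. y m') ` C - {s'})"
    have "finite F" unfolding F_def e using finite_cyl_residues[OF p] by simp
    moreover have "F \<subseteq> Cyls p" unfolding F_def by auto
    moreover have "disjoint F" unfolding F_def disjoint_def by (auto simp: cyl_def)
    moreover have "C - D = \<Union>F" unfolding F_def e by (rule cyl_diff_eq_Union[OF p mm])
    ultimately show ?thesis by blast
  qed
qed

lemma semiring_Cyls: assumes p: "p \<ge> 2" shows "semiring_of_sets (Qp p) (Cyls p)"
proof
  show "Cyls p \<subseteq> Pow (Qp p)" by (rule Cyls_subset_Pow)
  show "{} \<in> Cyls p" using cyl_neg_empty[OF p] cyl_in_Cyls by metis
qed (use Int_Cyls[OF p] Diff_Cyls[OF p] in blast)+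

lemma cyl_measure_finitely_additive:
  assumes p: "p \<ge> 2" and F: "finite F" and AC: "\<And>i. i \<in> F \<Longrightarrow> A i \<in> Cyls p"
    and dj: "disjoint_family_on A F" and UC: "(\<Union>i\<in>F. A i) \<in> Cyls p"
  shows "cyl_measure p (\<Union>i\<in>F. A i) = (\<Sum>i\<in>F. cyl_measure p (A i))"
proof -
  obtain mU sU where eU: "(\<Union>i\<in>F. A i) = cyl p mU sU" using CylsE[OF UC] by blast
  have "\<forall>i\<in>F. \<exists>ms. A i = cyl p (fst ms) (snd ms)" using AC CylsE by fastforce
  then obtain ms where ms: "\<And>i. i \<in> F \<Longrightarrow> A i = cyl p (fst (ms i)) (snd (ms i))" by metis
  define m where "m i = fst (ms i)" for i
  define s where "s i = snd (ms i)" for i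
  have eA: "\<And>i. i \<in> F \<Longrightarrow> A i = cyl p (m i) (s i)" using ms unfolding m_def s_def by blast
  define L where "L = Max (insert mU (m ` F))"
  have LU: "mU \<le> L" unfolding L_def using F by simp
  have Li: "\<And>i. i \<in> F \<Longrightarrow> m i \<le> L" unfolding L_def using F by simp
  define R where "R (C :: (int \<Rightarrow> rat) set) = (\<lambda>y. y L) ` C" for C
  have RU: "R (\<Union>i\<in>F. A i) = (\<Union>i\<in>F. R (A i))" unfolding R_def by blast
  have finR: "\<forall>i\<in>F. finite (R (A i))"
  proof
    fix i assume i: "i \<in> F"
    show "finite (R (A i))" unfolding R_def eA[OF i] by (rule finite_cyl_residues[OF p])
  qed
  have djR: "\<forall>i\<in>F. \<forall>j\<in>F. i \<noteq> j \<longrightarrow> R (A i) \<inter> R (A j) = {}"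
    using residues_disjoint_if_disjoint[OF p Li Li] dj eA unfolding R_def disjoint_family_on_def by metis
  have card: "card (R (\<Union>i\<in>F. A i)) = (\<Sum>i\<in>F. card (R (A i)))"
    unfolding RU by (rule card_UN_disjoint[OF F finR djR])
  have "cyl_measure p (\<Union>i\<in>F. A i) = ennreal (real (card (R (\<Union>i\<in>F. A i))) * real p powi (- L))"
    unfolding eU R_def by (rule cyl_measure_count[OF p LU])
  also have "\<dots> = ennreal (\<Sum>i\<in>F. real (card (R (A i))) * real p powi (- L))"
    unfolding card by (simp add: sum_distrib_right)
  also have "\<dots> = (\<Sum>i\<in>F. ennreal (real (card (R (A i))) * real p powi (- L)))"
    by (rule sum_ennreal[symmetric]) simp
  also have "\<dots> = (\<Sum>i\<in>F. cyl_measure p (A i))"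
  proof (rule sum.cong[OF refl])
    fix i assume i: "i \<in> F"
    show "ennreal (real (card (R (A i))) * real p powi (- L)) = cyl_measure p (A i)"
      unfolding eA[OF i] R_def by (rule cyl_measure_count[OF p Li[OF i], symmetric])
  qed
  finally show ?thesis .
qed

text \<open>A cylinder is compact and cylinders are open, so a countable disjoint union of cylinders
  forming a cylinder has only finitely many nonempty terms.\<close>
lemma countably_additive_cyl_measure:
  assumes p: "p \<ge> 2"
  shows "countably_additive (Cyls p) (cyl_measure p)"
  unfolding countably_additive_def
proof (intro allI impI)
  fix A :: "nat \<Rightarrow> (int \<Rightarrow> rat) set"
  assume AC: "range A \<subseteq> Cyls p" and dj: "disjoint_family A" and UC: "(\<Union>i. A i) \<in> Cyls p"
  obtain mU sU where eU: "(\<Union>i. A i) = cyl p mU sU" using CylsE[OF UC] by blast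
  have cpt: "compactin (ptop p) (\<Union>i. A i)" unfolding eU by (rule compactin_cyl[OF p])
  have opn: "\<forall>B\<in>range A. openin (ptop p) B"
  proof
    fix B assume "B \<in> range A"
    then have "B \<in> Cyls p" using AC by blast
    then obtain m s where "B = cyl p m s" using CylsE by blast
    then show "openin (ptop p) B" using openin_cyl[OF p] by simp
  qed
  have H: "\<forall>U. (\<forall>B\<in>U. openin (ptop p) B) \<and> (\<Union>i. A i) \<subseteq> \<Union>U \<longrightarrow> (\<exists>F. finite F \<and> F \<subseteq> U \<and> (\<Union>i. A i) \<subseteq> \<Union>F)"
    using cpt unfolding compactin_def by blast
  obtain F' where F': "finite F'" "F' \<subseteq> range A" "(\<Union>i. A i) \<subseteq> \<Union>F'"
    using spec[OF H, of "range A"] opn by blast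
  obtain F where F: "F \<subseteq> UNIV" "finite F" "F' = A ` F" using finite_subset_image[OF F'(1,2)] by blast
  have cov: "(\<Union>i. A i) = (\<Union>i\<in>F. A i)" using F'(3) F(3) by blast
  have zero: "A i = {}" if "i \<notin> F" for i
  proof -
    have "A i \<subseteq> (\<Union>j\<in>F. A j)" using cov by blast
    moreover have "A i \<inter> A j = {}" if "j \<in> F" for j
    proof -
      have "i \<noteq> j" using \<open>i \<notin> F\<close> that by blast
      then show ?thesis using dj unfolding disjoint_family_on_def by blast
    qed
    ultimately show ?thesis by blast
  qed
  have "(\<Sum>i. cyl_measure p (A i)) = (\<Sum>i\<in>F. cyl_measure p (A i))"
    by (rule suminf_finite[OF F(2)]) (simp add: zero cyl_measure_def)
  also have "\<dots> = cyl_measure p (\<Union>i\<in>F. A i)"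
    using AC dj UC cov by (intro cyl_measure_finitely_additive[OF p F(2), symmetric]) (auto simp: disjoint_family_on_def)
  also have "\<dots> = cyl_measure p (\<Union>i. A i)" using cov by simp
  finally show "(\<Sum>i. cyl_measure p (A i)) = cyl_measure p (\<Union>i. A i)" .
qed

lemma positive_cyl_measure: "positive (Cyls p) (cyl_measure p)"
  unfolding positive_def cyl_measure_def by simp

lemma cyl_measure_extends:
  assumes p: "p \<ge> 2"
  shows "\<exists>M. space M = Qp p \<and> sets M = sigma_sets (Qp p) (Cyls p) \<and> (\<forall>C\<in>Cyls p. emeasure M C = cyl_measure p C)"
proof -
  interpret S: semiring_of_sets "Qp p" "Cyls p" by (rule semiring_Cyls[OF p])
  obtain \<mu> where mu: "\<forall>C\<in>Cyls p. \<mu> C = cyl_measure p C" and ms: "measure_space (Qp p) (sigma_sets (Qp p) (Cyls p)) \<mu>"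
    using S.caratheodory[OF positive_cyl_measure countably_additive_cyl_measure[OF p]] by blast
  define M where "M = measure_of (Qp p) (sigma_sets (Qp p) (Cyls p)) \<mu>"
  have sa: "sigma_algebra (Qp p) (sigma_sets (Qp p) (Cyls p))"
    by (rule sigma_algebra_sigma_sets[OF Cyls_subset_Pow])
  have "space M = Qp p" unfolding M_def by (rule sigma_algebra.space_measure_of_eq[OF sa])
  moreover have "sets M = sigma_sets (Qp p) (Cyls p)" unfolding M_def by (rule sigma_algebra.sets_measure_of_eq[OF sa])
  moreover have "\<forall>C\<in>Cyls p. emeasure M C = cyl_measure p C"
  proof
    fix C assume C: "C \<in> Cyls p"
    have "emeasure M C = \<mu> C" unfolding M_def
      using ms C unfolding measure_space_def by (intro emeasure_measure_of_sigma) auto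
    then show "emeasure M C = cyl_measure p C" using mu C by simp
  qed
  ultimately show ?thesis by blast
qed

lemma padd_preimage_Cyls:
  assumes p: "p \<ge> 2" and t: "t \<in> Qp p" and C: "C \<in> Cyls p"
  shows "{y \<in> Qp p. padd p t y \<in> C} \<in> Cyls p \<and> cyl_measure p {y \<in> Qp p. padd p t y \<in> C} = cyl_measure p C"
proof -
  obtain m s where eC: "C = cyl p m s" using CylsE[OF C] by blast
  show ?thesis
  proof (cases "C = {}")
    case True
    then have "{y \<in> Qp p. padd p t y \<in> C} = {}" by simp
    then show ?thesis using True cyl_in_Cyls[of p m "-1"] cyl_neg_empty[OF p, of m] by (simp add: cyl_measure_def)
  next
    case False
    then obtain w where w: "w \<in> C" by blast
    then have wQ: "w \<in> Qp p" and e: "C = cyl p m (w m)" using eC by (auto simp: cyl_def)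
    have pre: "{y \<in> Qp p. padd p t y \<in> C} = cyl p m (pmod p m (w m - t m))" unfolding e by (rule padd_preimage_cyl[OF p t wQ])
    have y0: "padd p (pneg p t) w \<in> {y \<in> Qp p. padd p t y \<in> C}"
      using padd_pneg_cancel(1)[OF p t wQ] padd_in_Qp[OF p pneg_in_Qp[OF p t] wQ] w by simp
    then have ne: "cyl p m (pmod p m (w m - t m)) \<noteq> {}" using pre by auto
    have "cyl_measure p (cyl p m (pmod p m (w m - t m))) = cyl_measure p C"
      using cyl_level_cyl[OF p ne] cyl_level_cyl[OF p, of m "w m"] False e ne unfolding cyl_measure_def by simp
    then show ?thesis using pre by simp
  qed
qed

context
  fixes p :: nat and M :: "(int \<Rightarrow> rat) measure"
  assumes p: "p \<ge> 2" and space_M: "space M = Qp p" and sets_M: "sets M = sigma_sets (Qp p) (Cyls p)"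
    and emeasure_Cyls: "\<And>C. C \<in> Cyls p \<Longrightarrow> emeasure M C = cyl_measure p C"
begin

lemma Cyls_in_sets: "C \<in> Cyls p \<Longrightarrow> C \<in> sets M"
  unfolding sets_M by auto

lemma measurable_padd:
  assumes t: "t \<in> Qp p"
  shows "padd p t \<in> measurable M M"
proof (rule measurable_sigma_sets[OF sets_M Cyls_subset_Pow])
  show "padd p t \<in> space M \<rightarrow> Qp p" using padd_in_Qp[OF p t] space_M by auto
  fix C assume "C \<in> Cyls p"
  then have "{y \<in> Qp p. padd p t y \<in> C} \<in> Cyls p" using padd_preimage_Cyls[OF p t] by blast
  moreover have "padd p t -` C \<inter> space M = {y \<in> Qp p. padd p t y \<in> C}" using space_M by auto
  ultimately show "padd p t -` C \<inter> space M \<in> sets M" using Cyls_in_sets by simp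
qed

lemma emeasure_padd_preimage_Cyls:
  assumes t: "t \<in> Qp p" and C: "C \<in> Cyls p"
  shows "emeasure (distr M M (padd p t)) C = cyl_measure p C"
proof -
  have "emeasure (distr M M (padd p t)) C = emeasure M (padd p t -` C \<inter> space M)"
    by (rule emeasure_distr[OF measurable_padd[OF t] Cyls_in_sets[OF C]])
  also have "padd p t -` C \<inter> space M = {y \<in> Qp p. padd p t y \<in> C}" using space_M by auto
  finally show ?thesis using padd_preimage_Cyls[OF p t C] emeasure_Cyls by simp
qed

text \<open>Translation invariance is checked on the cylinders, which form an intersection-stable
  generator covered by the countably many finite-measure cylinders of level 0.\<close>
lemma distr_padd:
  assumes t: "t \<in> Qp p"
  shows "distr M M (padd p t) = M"
proof -
  have Ist: "Int_stable (Cyls p)"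
    unfolding Int_stable_def using semiring_of_sets.Int[OF semiring_Cyls[OF p]] by blast
  define A where "A i = cyl p 0 (from_nat_into (UNIV :: rat set) i)" for i
  have A: "range A \<subseteq> Cyls p" unfolding A_def by auto
  have "Qp p \<subseteq> (\<Union>i. A i)"
  proof
    fix y assume "y \<in> Qp p"
    moreover obtain i where "from_nat_into (UNIV :: rat set) i = y 0"
      using from_nat_into_surj[of "UNIV :: rat set" "y 0"] by auto
    ultimately show "y \<in> (\<Union>i. A i)" unfolding A_def cyl_def by (auto intro: exI[of _ i])
  qed
  then have AU: "(\<Union>i. A i) = Qp p" unfolding A_def cyl_def by auto
  show ?thesis
  proof (rule measure_eqI_generator_eq[OF Ist Cyls_subset_Pow _ _ _ A AU])
    show "\<And>C. C \<in> Cyls p \<Longrightarrow> emeasure (distr M M (padd p t)) C = emeasure M C"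
      using emeasure_padd_preimage_Cyls[OF t] emeasure_Cyls by simp
    fix i
    have "A i \<in> Cyls p" using A by blast
    then show "emeasure (distr M M (padd p t)) (A i) \<noteq> \<infinity>"
      using emeasure_padd_preimage_Cyls[OF t] by (simp add: cyl_measure_def)
  qed (simp_all add: sets_M)
qed

lemma padd_image_sets_emeasure:
  assumes x: "x \<in> Qp p" and B: "B \<in> sets M"
  shows "padd p x ` B \<in> sets M" "emeasure M (padd p x ` B) = emeasure M B"
proof -
  have nx: "pneg p x \<in> Qp p" by (rule pneg_in_Qp[OF p x])
  have BQ: "B \<subseteq> Qp p" using sets.sets_into_space[OF B] space_M by simp
  have img: "padd p x ` B = padd p (pneg p x) -` B \<inter> space M"
  proof
    show "padd p x ` B \<subseteq> padd p (pneg p x) -` B \<inter> space M"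
      using padd_pneg_cancel(2)[OF p x] padd_in_Qp[OF p x] BQ space_M by auto
    show "padd p (pneg p x) -` B \<inter> space M \<subseteq> padd p x ` B"
    proof
      fix y assume y: "y \<in> padd p (pneg p x) -` B \<inter> space M"
      then have "y = padd p x (padd p (pneg p x) y)" using padd_pneg_cancel(1)[OF p x] space_M by auto
      then show "y \<in> padd p x ` B" using y by blast
    qed
  qed
  show "padd p x ` B \<in> sets M" unfolding img using measurable_padd[OF nx] B by (rule measurable_sets)
  show "emeasure M (padd p x ` B) = emeasure M B"
    using emeasure_distr[OF measurable_padd[OF nx] B] unfolding img distr_padd[OF nx] by simp
qed

lemma emeasure_compactin_finite:
  assumes K: "compactin (ptop p) K"
  shows "emeasure M K < \<infinity>"
proof -
  obtain F where F: "finite F" "F \<subseteq> Cyls p" "K \<subseteq> \<Union>F"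
    using compactin_covered_by_finite_Cyls[OF p K] .
  have "emeasure M K \<le> emeasure M (\<Union>F)"
    by (rule emeasure_mono[OF F(3)]) (use F Cyls_in_sets in \<open>auto intro: sets.finite_Union\<close>)
  also have "\<dots> \<le> (\<Sum>C\<in>F. emeasure M C)"
    using emeasure_subadditive_finite[OF F(1), of "\<lambda>C. C" M] F(2) Cyls_in_sets by auto
  also have "\<dots> < \<infinity>"
    using F emeasure_Cyls by (auto simp: cyl_measure_def sum_Pinfty less_top subset_eq)
  finally show ?thesis .
qed

lemma is_haar_cyl_measure: "is_haar p M"
  unfolding is_haar_def
proof (intro conjI ballI allI impI)
  show "sets M = sigma_sets (Qp p) {U. openin (ptop p) U}"
    using sets_M sigma_Cyls_eq[OF p] by simp
  have ne: "cyl p 0 0 \<noteq> {}" using pzero_in_Qp[OF p] by (auto simp: cyl_def pzero_def)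
  show "emeasure M (Zp p) = 1"
    using emeasure_Cyls[of "cyl p 0 0"] cyl_level_cyl[OF p ne] ne
    by (simp add: Zp_eq_cyl[OF p] cyl_measure_def)
qed (use space_M padd_image_sets_emeasure emeasure_compactin_finite in auto)

end

lemma is_haar_exists: "p \<ge> 2 \<Longrightarrow> \<exists>M. is_haar p M"
  using cyl_measure_extends is_haar_cyl_measure by metis

lemma is_haar_haar: "p \<ge> 2 \<Longrightarrow> is_haar p (haar p)"
  unfolding haar_def using is_haar_exists by (rule someI_ex)

lemma is_haarD:
  assumes H: "is_haar p M"
  shows "space M = Qp p" "sets M = sigma_sets (Qp p) {U. openin (ptop p) U}"
    "\<And>x A. x \<in> Qp p \<Longrightarrow> A \<in> sets M \<Longrightarrow> padd p x ` A \<in> sets M \<and> emeasure M (padd p x ` A) = emeasure M A"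
    "\<And>K. compactin (ptop p) K \<Longrightarrow> emeasure M K < \<infinity>" "emeasure M (Zp p) = 1"
  using H unfolding is_haar_def by auto

lemma sets_is_haar_cyl: assumes p: "p \<ge> 2" and H: "is_haar p M" shows "cyl p m s \<in> sets M"
  unfolding is_haarD(2)[OF H] using openin_cyl[OF p] cyl_subset_Qp by (auto intro: sigma_sets.Basic)

lemma is_haar_translation:
  assumes p: "p \<ge> 2" and H: "is_haar p M" and t: "t \<in> Qp p"
  shows "padd p t \<in> measurable M M" "distr M M (padd p t) = M"
proof -
  note sp = is_haarD(1)[OF H]
  have nt: "pneg p t \<in> Qp p" by (rule pneg_in_Qp[OF p t])
  have pre: "padd p t -` A \<inter> space M = padd p (pneg p t) ` A" if A: "A \<in> sets M" for A
  proof
    have AQ: "A \<subseteq> Qp p" using sets.sets_into_space[OF A] sp by simp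
    show "padd p t -` A \<inter> space M \<subseteq> padd p (pneg p t) ` A"
    proof
      fix y assume y: "y \<in> padd p t -` A \<inter> space M"
      then have "y = padd p (pneg p t) (padd p t y)" using padd_pneg_cancel(2)[OF p t] sp by auto
      then show "y \<in> padd p (pneg p t) ` A" using y by blast
    qed
    show "padd p (pneg p t) ` A \<subseteq> padd p t -` A \<inter> space M"
      using padd_pneg_cancel(1)[OF p t] padd_in_Qp[OF p nt] AQ sp by auto
  qed
  show m: "padd p t \<in> measurable M M"
  proof (rule measurableI)
    show "\<And>x. x \<in> space M \<Longrightarrow> padd p t x \<in> space M" using padd_in_Qp[OF p t] sp by auto
    show "\<And>A. A \<in> sets M \<Longrightarrow> padd p t -` A \<inter> space M \<in> sets M"
      using pre is_haarD(3)[OF H nt] by simp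
  qed
  show "distr M M (padd p t) = M"
  proof (rule measure_eqI)
    show "sets (distr M M (padd p t)) = sets M" by simp
    fix A assume "A \<in> sets (distr M M (padd p t))"
    then have A: "A \<in> sets M" by simp
    show "emeasure (distr M M (padd p t)) A = emeasure M A"
      using emeasure_distr[OF m A] pre[OF A] is_haarD(3)[OF H nt A] by simp
  qed
qed

lemma emeasure_cyl_translate:
  assumes p: "p \<ge> 2" and H: "is_haar p M" and x: "x \<in> Qp p"
  shows "emeasure M (cyl p L (x L)) = emeasure M (cyl p L 0)"
  using is_haarD(3)[OF H x sets_is_haar_cyl[OF p H, of L 0]] padd_image_cyl[OF p x, of L] by simp

lemma nn_integral_padd:
  assumes p: "p \<ge> 2" and H: "is_haar p M" and t: "t \<in> Qp p" and h: "h \<in> borel_measurable M"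
  shows "(\<integral>\<^sup>+ z. h (padd p t z) \<partial>M) = (\<integral>\<^sup>+ y. h y \<partial>M)"
  using nn_integral_distr[OF is_haar_translation(1)[OF p H t], of h] h
  unfolding is_haar_translation(2)[OF p H t] by simp

lemma measurable_psub_right:
  assumes p: "p \<ge> 2" and H: "is_haar p M" and t: "t \<in> Qp p" and f: "f \<in> borel_measurable M"
  shows "(\<lambda>y. f (psub p y t)) \<in> borel_measurable M"
  unfolding psub_eq_padd using measurable_compose[OF is_haar_translation(1)[OF p H pneg_in_Qp[OF p t]] f] .

section \<open>Uniform partitions of unity\<close>

text \<open>Integrating the partition of unity over a cylinder B gives
  \<open>\<mu>(B) = \<Sum>\<^sub>t \<integral> 1\<^sub>B(t + z) f(z) dz = \<integral> f(z) #{t \<in> T. t + z \<in> B} dz\<close>.\<close>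
lemma emeasure_cyl_convolution:
  assumes p: "p \<ge> 2" and H: "is_haar p M" and TQ: "T \<subseteq> Qp p" and lf: "locally_finite p T"
    and fm: "f \<in> borel_measurable M"
    and AEs: "AE y in M. (\<integral>\<^sup>+ t. ennreal (f (psub p y t)) \<partial>count_space T) = 1"
    and x: "x \<in> Qp p"
  shows "emeasure M (cyl p L (x L)) = (\<integral>\<^sup>+ z. ennreal (f z) * of_nat (card (cyl p L (psub p x z L) \<inter> T)) \<partial>M)"
proof -
  note space_M = is_haarD(1)[OF H]
  have cT: "countable T" by (rule countable_locally_finite[OF p TQ lf])
  have tQ: "t \<in> Qp p" if "t \<in> T" for t using that TQ by auto
  define B where "B = cyl p L (x L)"
  have Bm: "B \<in> sets M" unfolding B_def by (rule sets_is_haar_cyl[OF p H])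
  have m1: "(\<lambda>y. indicator B y * ennreal (f (psub p y t))) \<in> borel_measurable M" if "t \<in> T" for t
    using measurable_psub_right[OF p H tQ[OF that] fm] Bm by measurable
  have m2: "(\<lambda>z. indicator B (padd p t z) * ennreal (f z)) \<in> borel_measurable M" if "t \<in> T" for t
    using measurable_compose[OF is_haar_translation(1)[OF p H tQ[OF that]] borel_measurable_indicator[OF Bm]] fm
    by measurable
  have "emeasure M B = (\<integral>\<^sup>+ y. indicator B y \<partial>M)" using Bm by simp
  also have "\<dots> = (\<integral>\<^sup>+ y. (\<integral>\<^sup>+ t. indicator B y * ennreal (f (psub p y t)) \<partial>count_space T) \<partial>M)"
    using AEs by (intro nn_integral_cong_AE) (auto simp: nn_integral_cmult)
  also have "\<dots> = (\<integral>\<^sup>+ t. (\<integral>\<^sup>+ y. indicator B y * ennreal (f (psub p y t)) \<partial>M) \<partial>count_space T)"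
    by (rule nn_integral_count_space_nn_integral[OF cT m1])
  also have "\<dots> = (\<integral>\<^sup>+ t. (\<integral>\<^sup>+ z. indicator B (padd p t z) * ennreal (f z) \<partial>M) \<partial>count_space T)"
  proof (rule nn_integral_cong)
    fix t assume "t \<in> space (count_space T)"
    then have t: "t \<in> T" by simp
    have "(\<integral>\<^sup>+ z. indicator B (padd p t z) * ennreal (f z) \<partial>M)
        = (\<integral>\<^sup>+ z. indicator B (padd p t z) * ennreal (f (psub p (padd p t z) t)) \<partial>M)"
      using psub_padd_cancel[OF p _ tQ[OF t]] space_M by (intro nn_integral_cong) simp
    also have "\<dots> = (\<integral>\<^sup>+ y. indicator B y * ennreal (f (psub p y t)) \<partial>M)"
      by (rule nn_integral_padd[OF p H tQ[OF t] m1[OF t]])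
    finally show "(\<integral>\<^sup>+ y. indicator B y * ennreal (f (psub p y t)) \<partial>M)
        = (\<integral>\<^sup>+ z. indicator B (padd p t z) * ennreal (f z) \<partial>M)" ..
  qed
  also have "\<dots> = (\<integral>\<^sup>+ z. (\<integral>\<^sup>+ t. indicator B (padd p t z) * ennreal (f z) \<partial>count_space T) \<partial>M)"
    by (rule nn_integral_count_space_nn_integral[OF cT m2, symmetric])
  also have "\<dots> = (\<integral>\<^sup>+ z. ennreal (f z) * of_nat (card (cyl p L (psub p x z L) \<inter> T)) \<partial>M)"
  proof (rule nn_integral_cong)
    fix z assume "z \<in> space M"
    then have z: "z \<in> Qp p" using space_M by simp
    define A where "A = cyl p L (psub p x z L) \<inter> T"
    have A: "A \<subseteq> T" "finite A"
      using lf compactin_cyl[OF p] unfolding A_def locally_finite_def by auto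
    have "(\<integral>\<^sup>+ t. indicator B (padd p t z) * ennreal (f z) \<partial>count_space T)
        = (\<integral>\<^sup>+ t. ennreal (f z) * indicator A t \<partial>count_space T)"
      using padd_in_cyl_iff[OF p x tQ z] tQ unfolding A_def B_def
      by (intro nn_integral_cong) (auto simp: indicator_def cyl_def)
    also have "\<dots> = ennreal (f z) * of_nat (card A)"
      using A by (simp add: nn_integral_cmult_indicator)
    finally show "(\<integral>\<^sup>+ t. indicator B (padd p t z) * ennreal (f z) \<partial>count_space T)
        = ennreal (f z) * of_nat (card (cyl p L (psub p x z L) \<inter> T))" unfolding A_def .
  qed
  finally show ?thesis unfolding B_def .
qed

lemma has_sum_indicator_div_card:
  assumes S: "finite S" "S \<subseteq> T" "S \<noteq> {}"
  shows "((\<lambda>t. indicator S t / real (card S)) has_sum 1) T"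
proof (rule has_sum_finite_neutralI[OF S(1,2)])
  show "1 = (\<Sum>t\<in>S. indicator S t / real (card S))" using S by simp
qed simp

lemma psub_in_cyl_zero_iff:
  assumes p: "p \<ge> 2" and x: "x \<in> Qp p" and t: "t \<in> Qp p"
  shows "psub p x t \<in> cyl p L 0 \<longleftrightarrow> t \<in> cyl p L (x L)"
proof -
  have "psub p x t \<in> cyl p L 0 \<longleftrightarrow> psub p x t L = 0" using psub_in_Qp[OF p x t] unfolding cyl_def by simp
  also have "\<dots> \<longleftrightarrow> t L = x L" using psub_eq_0_iff[OF p x t, of L] by (rule trans) (rule eq_commute)
  also have "\<dots> \<longleftrightarrow> t \<in> cyl p L (x L)" using t unfolding cyl_def by simp
  finally show ?thesis .
qed

lemma uniform_partition_of_unity_if_equal_counts: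
  assumes p: "p \<ge> 2" and TQ: "T \<subseteq> Qp p" and Tne: "T \<noteq> {}" and lf: "locally_finite p T"
    and cst: "\<forall>x\<in>Qp p. \<forall>y\<in>Qp p. card (pball p x n \<inter> T) = card (pball p y n \<inter> T)"
  shows "uniform_partition_of_unity p T"
proof -
  define M where "M = haar p"
  have H: "is_haar p M" unfolding M_def by (rule is_haar_haar[OF p])
  define c where "c = card (pball p pzero n \<inter> T)"
  have cx: "card (pball p x n \<inter> T) = c" if "x \<in> Qp p" for x
    unfolding c_def by (rule cst[rule_format, OF that pzero_in_Qp[OF p]])
  have ne: "pball p x n \<inter> T \<noteq> {}" if "x \<in> Qp p" for x
  proof -
    obtain t where t: "t \<in> T" using Tne by blast
    then have tQ: "t \<in> Qp p" using TQ by blast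
    have "t \<in> pball p t n" unfolding pball_eq_cyl[OF p tQ] cyl_def using tQ by simp
    then have "t \<in> pball p t n \<inter> T" using t by blast
    then have "card (pball p t n \<inter> T) \<noteq> 0" using finite_pball_Int[OF p tQ lf] by (auto simp: card_eq_0_iff)
    then show ?thesis using cx[OF that] cx[OF tQ] by auto
  qed
  define B where "B = cyl p (- n) 0"
  have Bm: "B \<in> sets M" unfolding B_def by (rule sets_is_haar_cyl[OF p H])
  have Bfin: "emeasure M B < \<infinity>" unfolding B_def by (rule is_haarD(4)[OF H compactin_cyl[OF p]])
  define f where "f z = indicator B z / real c" for z
  have "integrable M (indicator B :: _ \<Rightarrow> real)"
    unfolding integrable_indicator_iff using Bm Bfin sets.sets_into_space[OF Bm] by (simp add: Int_absorb2)
  then have fi: "integrable M f" unfolding f_def by (rule integrable_divide_zero)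
  have "((\<lambda>t. f (psub p x t)) has_sum 1) T" if x: "x \<in> Qp p" for x
  proof -
    have eq: "f (psub p x t) = indicator (pball p x n \<inter> T) t / real (card (pball p x n \<inter> T))"
      if t: "t \<in> T" for t
    proof -
      have "t \<in> Qp p" using t TQ by blast
      then have "psub p x t \<in> B \<longleftrightarrow> t \<in> pball p x n \<inter> T"
        using psub_in_cyl_zero_iff[OF p x, of t "- n"] t unfolding B_def pball_eq_cyl[OF p x] by blast
      then show ?thesis unfolding f_def cx[OF x] by (simp add: indicator_def)
    qed
    have "((\<lambda>t. indicator (pball p x n \<inter> T) t / real (card (pball p x n \<inter> T))) has_sum 1) T"
      by (rule has_sum_indicator_div_card[OF finite_pball_Int[OF p x lf] Int_lower2 ne[OF x]])
    then show ?thesis using has_sum_cong[of T "\<lambda>t. f (psub p x t)", OF eq] by simp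
  qed
  then have "AE x in M. ((\<lambda>t. f (psub p x t)) has_sum 1) T"
    using is_haarD(1)[OF H] by (intro AE_I2) simp
  moreover have "\<forall>x\<in>Qp p. 0 \<le> f x" unfolding f_def by simp
  ultimately show ?thesis unfolding uniform_partition_of_unity_def M_def[symmetric] using fi by blast
qed

lemma nn_integral_shifted_eq_1:
  assumes p: "p \<ge> 2" and H: "is_haar p M" and TQ: "T \<subseteq> Qp p" and lf: "locally_finite p T"
    and fnn: "\<forall>x\<in>Qp p. 0 \<le> f x" and ae: "AE x in M. ((\<lambda>t. f (psub p x t)) has_sum 1) T"
  shows "AE y in M. (\<integral>\<^sup>+ t. ennreal (f (psub p y t)) \<partial>count_space T) = 1"
  using ae AE_space
proof eventually_elim
  case (elim y)
  then have "y \<in> Qp p" using is_haarD(1)[OF H] by simp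
  then show ?case
    using nn_integral_count_space_has_sum[OF countable_locally_finite[OF p TQ lf] _ elim(1)]
      fnn psub_in_Qp[OF p] TQ by (simp add: subset_eq)
qed

lemma equal_counts_if_uniform_partition_of_unity:
  assumes p: "p \<ge> 2" and TQ: "T \<subseteq> Qp p" and lf: "locally_finite p T"
    and upu: "uniform_partition_of_unity p T"
  shows "\<exists>n::int. \<forall>x\<in>Qp p. \<forall>y\<in>Qp p. card (pball p x n \<inter> T) = card (pball p y n \<inter> T)"
proof -
  define M where "M = haar p"
  have H: "is_haar p M" unfolding M_def by (rule is_haar_haar[OF p])
  note space_M = is_haarD(1)[OF H]
  obtain f :: "(int \<Rightarrow> rat) \<Rightarrow> real" where fi: "integrable M f" and fnn: "\<forall>x\<in>Qp p. 0 \<le> f x"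
    and ae: "AE x in M. ((\<lambda>t. f (psub p x t)) has_sum 1) T"
    using upu unfolding uniform_partition_of_unity_def M_def by blast
  have fm: "f \<in> borel_measurable M" using fi by blast
  have fin: "(\<integral>\<^sup>+ z. ennreal (f z) \<partial>M) < \<infinity>"
    using integrableD(2)[OF fi] by (simp add: less_top)
  define cnt where "cnt L w = card (cyl p L (w L) \<inter> T)" for L w
  have conv: "emeasure M (cyl p L (x L)) = (\<integral>\<^sup>+ z. ennreal (f z) * of_nat (cnt L (psub p x z)) \<partial>M)"
    if "x \<in> Qp p" for x L
    unfolding cnt_def
    using emeasure_cyl_convolution[OF p H TQ lf fm nn_integral_shifted_eq_1[OF p H TQ lf fnn ae] that] .
  have gm: "(\<lambda>z. ennreal (f z)) \<in> borel_measurable M" using fm by measurable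
  have "emeasure M (cyl p 0 (pzero 0)) \<noteq> 0"
    using is_haarD(5)[OF H] Zp_eq_cyl[OF p] by (simp add: pzero_def)
  then have "(\<integral>\<^sup>+ z. ennreal (f z) \<partial>M) \<noteq> 0"
    using conv[OF pzero_in_Qp[OF p], of 0]
    by (intro nn_integral_ne_0_if_weighted_ne_0[OF gm, where h = "\<lambda>z. of_nat (cnt 0 (psub p pzero z))"]) simp
  moreover have "range (\<lambda>k::nat. cyl p (- int k) 0) \<subseteq> sets M" using sets_is_haar_cyl[OF p H] by blast
  ultimately obtain L where heavy:
    "(\<integral>\<^sup>+ z. ennreal (f z) * indicator (space M - cyl p L 0) z \<partial>M)
       < (\<integral>\<^sup>+ z. ennreal (f z) * indicator (cyl p L 0) z \<partial>M)"
    using nn_integral_concentrates_on_incseq[OF incseq_cyl_zero[OF p] _ Union_cyl_zero[of p, folded space_M] gm fin]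
    by blast
  have equal: "cnt L x = cnt L y" if "x \<in> Qp p" "y \<in> Qp p" for x y
  proof (rule constant_if_shifted_averages_agree[where s = "psub p" and V = "emeasure M (cyl p L 0)",
        OF gm sets_is_haar_cyl[OF p H] heavy fin])
    show "\<And>x z. x \<in> space M \<Longrightarrow> z \<in> space M \<Longrightarrow> psub p x z \<in> space M"
      using psub_in_Qp[OF p] space_M by simp
    show "\<And>x z. x \<in> space M \<Longrightarrow> z \<in> cyl p L 0 \<Longrightarrow> cnt L (psub p x z) = cnt L x"
      using psub_residue_cyl_zero[OF p] space_M unfolding cnt_def by simp
    show "\<And>x. x \<in> space M \<Longrightarrow> (\<integral>\<^sup>+ z. ennreal (f z) * of_nat (cnt L (psub p x z)) \<partial>M) = emeasure M (cyl p L 0)"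
      using conv emeasure_cyl_translate[OF p H] space_M by simp
    show "emeasure M (cyl p L 0) < \<infinity>" by (rule is_haarD(4)[OF H compactin_cyl[OF p]])
  qed (use that space_M in simp_all)
  show ?thesis
  proof (intro exI[of _ "- L"] ballI)
    fix x y assume "x \<in> Qp p" "y \<in> Qp p"
    then show "card (pball p x (- L) \<inter> T) = card (pball p y (- L) \<inter> T)"
      using equal[of x y] unfolding cnt_def pball_eq_cyl[OF p \<open>x \<in> Qp p\<close>] pball_eq_cyl[OF p \<open>y \<in> Qp p\<close>]
      by simp
  qed
qed

theorem theorem1p2:
  fixes p :: nat and T :: "(int \<Rightarrow> rat) set"
  assumes "prime p"
    and "T \<subseteq> Qp p" and "T \<noteq> {}"
    and "locally_finite p T"
  shows "uniform_partition_of_unity p T \<longleftrightarrow>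
         (\<exists>n::int. \<forall>x\<in>Qp p. \<forall>y\<in>Qp p. card (pball p x n \<inter> T) = card (pball p y n \<inter> T))"
proof -
  have p: "p \<ge> 2" using assms(1) by (rule prime_ge_2_nat)
  show ?thesis
    using equal_counts_if_uniform_partition_of_unity[OF p assms(2,4)]
      uniform_partition_of_unity_if_equal_counts[OF p assms(2,3,4)] by blast
qed

end
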